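(* Let $G$ be a GP 2 host graph such that every node is marked grey, exactly one node is a root, every edge is unmarked and labelled with an integer, and there are no loops; let $n$ and $m$ be its numbers of nodes and edges. When the GP 2 program bellman-ford is executed on $G$ (via the GP 2-to-C compiler, under the cost model below), it terminates in time $\mathrm{O}(nm)$.
   Context: GP 2 semantics. Host graphs are finite directed graphs whose nodes and edges carry labels (lists of integers and strings; "x:s" denotes the list x followed by the atom s) and marks (nodes: unmarked, red, green, blue, grey; edges: unmarked, red, green, blue, dashed); some nodes are roots. A rule (with list variables x,y and integer variables i,s,t,w) is applied by finding an injective label- and mark-compatible match of its left-hand side (mark "any" matches every mark; roots match roots), satisfying the dangling condition and the rule's condition, then changing matched items as prescribed by the right-hand side. Commands: a rule set call applies one applicable rule, failing if none applies; $P;Q$ sequencing; $P!$ iterates $P$ until it fails; "try $C$ then $P$ else $Q$" runs $C$ and continues with $P$ on its result if it succeeded, else $Q$ on the original graph; "if $C$ then $P$ else $Q$" runs $C$ on a copy then $P$ or $Q$ on the original; fail causes failure. Cost model (updated GP 2-to-C compiler). Host nodes are stored in separate linked lists per node mark, roots in a list, and each node has a two-dimensional array of linked lists of incident edges indexed by edge mark and orientation (incoming, outgoing, loop). Each elementary operation takes constant time: fetch first/next node with a given mark; fetch first/next root; given a node, fetch first/next incoming, outgoing or loop edge with a given mark; read degrees, mark, root status, source, target; set/clear/test a "matched" flag. Matching is a search using these operations; once a match is found, completing a rule application takes constant time for the rules of this program. Running time is the total cost. The program bellman-ford: Main = set_counter; count!; (decrement; Relax!; Clean!)!; Final Relax =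 root1; try no_deg else ((unmarked_edge; try {unvisited, reduce}; finish)!; unroot1) Clean = root2; unmark_edge!; unroot2 Final = (root1; (unmarked_edge; if reduce then set_flag; finish)!; unroot1)!; if flag then fail; delete_counter; no_deg_inv! Rules (edges directed 1→2; labels unchanged unless stated): - set_counter(x): grey root labelled x becomes blue non-root labelled x:0; a new green node labelled 0 is created with a new dashed edge from it to node 1. - count(x; i): grey node 1 labelled x and green node 2 labelled i; node 1 becomes blue labelled x:"f", node 2 labelled i+1. - decrement(i): green node labelled i with i>0; label becomes i−1. - root1: blue node becomes blue root. - no_deg(x): a blue root labelled x with no incident edges is replaced by an unmarked non-root node labelled x. - unmarked_edge: blue root 1, node 2 any mark, unmarked edge 1→2; edge becomes red. - unvisited(x,y; s,w): blue root 1 labelled x:s, node 2 labelled y:"f", red edge labelled w; node 2 labelled y:(s+w). - reduce(x,y; s,t,w): blue root 1 labelled x:s, node 2 labelled y:t, red edge labelled w, condition s+w<t; node 2 labelled y:(s+w). - finish: blue root 1, red edge 1→2; edge becomes blue. - unroot1: blue root becomes grey non-root. - root2: grey node becomes blue root. - unmark_edge: blue root 1, blue edge 1→2; edge becomes unmarked. - unroot2: blue root becomes blue non-root. - set_flag: a green node's label becomes −1. - flag: green node labelled −1; no change. - delete_counter: a node 1 together with a green node and a dashed edge from the green node to node 1; the green node and dashed edge are deleted and node 1 becomes a root. - no_deg_inv: an unmarked node becomes grey. *)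

theory Defs
  imports Main
begin

datatype atom = AInt int | AStr string
type_synonym label = "atom list"   \<comment> \<open>"x:s" is  x @ [s]\<close>

datatype nmark = NUnm | NRed | NGreen | NBlue | NGrey
datatype emark = EUnm | ERed | EGreen | EBlue | EDashed

record hgraph =
  V    :: "nat set"
  E    :: "nat set"
  src  :: "nat \<Rightarrow> nat"
  tgt  :: "nat \<Rightarrow> nat"
  nlab :: "nat \<Rightarrow> label"
  elab :: "nat \<Rightarrow> label"
  nmk  :: "nat \<Rightarrow> nmark"
  emk  :: "nat \<Rightarrow> emark"
  rt   :: "nat set"

definition wf_graph :: "hgraph \<Rightarrow> bool" where
  "wf_graph g \<longleftrightarrow> finite (V g) \<and> finite (E g) \<and>
     (\<forall>e\<in>E g. src g e \<in> V g \<and> tgt g e \<in> V g) \<and> rt g \<subseteq> V g"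

text \<open>The linked lists of the compiler's host-graph representation (as sets; their
  order is left arbitrary, see scan below).\<close>
definition nodes_mk :: "hgraph \<Rightarrow> nmark \<Rightarrow> nat set" where
  "nodes_mk g \<mu> = {v \<in> V g. nmk g v = \<mu>}"

definition roots :: "hgraph \<Rightarrow> nat set" where
  "roots g = rt g \<inter> V g"

definition out_mk :: "hgraph \<Rightarrow> nat \<Rightarrow> emark \<Rightarrow> nat set" where
  "out_mk g v \<mu> = {e \<in> E g. src g e = v \<and> tgt g e \<noteq> v \<and> emk g e = \<mu>}"

section \<open>Cost of matching: search plans over linked lists\<close>

text \<open>A search outcome is a pair (found match or None, number of elementary operations).
  Traversing a list: every fetch of a first/next element costs 1 (including the final
  fetch that returns null); the search stops at the first candidate whose sub-search succeeds.\<close>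
fun scan_list :: "'a list \<Rightarrow> ('a \<Rightarrow> ('r option \<times> nat) set) \<Rightarrow> ('r option \<times> nat) set" where
  "scan_list [] k = {(None, 1)}"
| "scan_list (x # xs) k =
     {(Some r, Suc c) | r c. (Some r, c) \<in> k x} \<union>
     {(res, Suc (c + c')) | c res c'. (None, c) \<in> k x \<and> (res, c') \<in> scan_list xs k}"

text \<open>The order of a linked list is arbitrary: any enumeration of the candidate set.\<close>
definition scan :: "'a set \<Rightarrow> ('a \<Rightarrow> ('r option \<times> nat) set) \<Rightarrow> ('r option \<times> nat) set" where
  "scan S k = (\<Union>xs \<in> {xs. distinct xs \<and> set xs = S}. scan_list xs k)"

text \<open>Testing a candidate (mark, root status, degrees, label, matched flag) costs 1.\<close>
definition chk :: "bool \<Rightarrow> ('r option \<times> nat) set \<Rightarrow> ('r option \<times> nat) set" where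
  "chk P K = (if P then {(r, Suc c) | r c. (r, c) \<in> K} else {(None, 1)})"

definition found :: "'r \<Rightarrow> ('r option \<times> nat) set" where
  "found r = {(Some r, 0)}"

datatype rule = SetCounter | Count | Decrement | Root1 | NoDeg | UnmarkedEdge | Unvisited
  | Reduce | Finish | Unroot1 | Root2 | UnmarkEdge | Unroot2 | SetFlag | Flag
  | DeleteCounter | NoDegInv

definition is_int_label :: "label \<Rightarrow> bool" where
  "is_int_label l \<longleftrightarrow> (\<exists>i. l = [AInt i])"

definition int_suffix :: "label \<Rightarrow> bool" where
  "int_suffix l \<longleftrightarrow> (\<exists>x s. l = x @ [AInt s])"

text \<open>Search plans (matches are lists [node1, node2, edge] of host items).
  Root LHS nodes are searched in the root list, other nodes in the list of their mark,
  nodes of mark any are reached through edges.\<close>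
fun search :: "rule \<Rightarrow> hgraph \<Rightarrow> (nat list option \<times> nat) set" where
  "search SetCounter g = scan (roots g) (\<lambda>v. chk (nmk g v = NGrey) (found [v]))"
| "search Count g = scan (nodes_mk g NGrey) (\<lambda>v. chk True
      (scan (nodes_mk g NGreen) (\<lambda>u. chk (is_int_label (nlab g u)) (found [v, u]))))"
| "search Decrement g = scan (nodes_mk g NGreen)
      (\<lambda>u. chk (\<exists>i. nlab g u = [AInt i] \<and> i > 0) (found [u]))"
| "search Root1 g = scan (nodes_mk g NBlue) (\<lambda>v. chk True (found [v]))"
| "search NoDeg g = scan (roots g)
      (\<lambda>v. chk (nmk g v = NBlue \<and> (\<forall>e\<in>E g. src g e \<noteq> v \<and> tgt g e \<noteq> v)) (found [v]))"
| "search UnmarkedEdge g = scan (roots g) (\<lambda>v. chk (nmk g v = NBlue)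
      (scan (out_mk g v EUnm) (\<lambda>e. chk True (found [v, tgt g e, e]))))"
| "search Unvisited g = scan (roots g) (\<lambda>v. chk (nmk g v = NBlue \<and> int_suffix (nlab g v))
      (scan (out_mk g v ERed) (\<lambda>e. chk (is_int_label (elab g e) \<and>
          (\<exists>y. nlab g (tgt g e) = y @ [AStr ''f''])) (found [v, tgt g e, e]))))"
| "search Reduce g = scan (roots g) (\<lambda>v. chk (nmk g v = NBlue \<and> int_suffix (nlab g v))
      (scan (out_mk g v ERed) (\<lambda>e. chk (\<exists>x y s t w. nlab g v = x @ [AInt s] \<and>
          elab g e = [AInt w] \<and> nlab g (tgt g e) = y @ [AInt t] \<and> s + w < t)
          (found [v, tgt g e, e]))))"
| "search Finish g = scan (roots g) (\<lambda>v. chk (nmk g v = NBlue)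
      (scan (out_mk g v ERed) (\<lambda>e. chk True (found [v, tgt g e, e]))))"
| "search Unroot1 g = scan (roots g) (\<lambda>v. chk (nmk g v = NBlue) (found [v]))"
| "search Root2 g = scan (nodes_mk g NGrey) (\<lambda>v. chk True (found [v]))"
| "search UnmarkEdge g = scan (roots g) (\<lambda>v. chk (nmk g v = NBlue)
      (scan (out_mk g v EBlue) (\<lambda>e. chk True (found [v, tgt g e, e]))))"
| "search Unroot2 g = scan (roots g) (\<lambda>v. chk (nmk g v = NBlue) (found [v]))"
| "search SetFlag g = scan (nodes_mk g NGreen) (\<lambda>u. chk True (found [u]))"
| "search Flag g = scan (nodes_mk g NGreen) (\<lambda>u. chk (nlab g u = [AInt (-1)]) (found [u]))"
| "search DeleteCounter g = scan (nodes_mk g NGreen) (\<lambda>u. chk True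
      (scan (out_mk g u EDashed) (\<lambda>e.
         chk (\<forall>e'\<in>E g. (src g e' = u \<or> tgt g e' = u) \<longrightarrow> e' = e)  \<comment> \<open>dangling condition\<close>
         (found [tgt g e, u, e]))))"
| "search NoDegInv g = scan (nodes_mk g NUnm) (\<lambda>v. chk True (found [v]))"

fun app :: "rule \<Rightarrow> hgraph \<Rightarrow> nat list \<Rightarrow> hgraph set" where
  "app SetCounter g m = (let v = m ! 0 in
     {g\<lparr>V := insert c (V g), E := insert e (E g), src := (src g)(e := c), tgt := (tgt g)(e := v),
        nlab := (nlab g)(v := nlab g v @ [AInt 0], c := [AInt 0]), elab := (elab g)(e := []),
        nmk := (nmk g)(v := NBlue, c := NGreen), emk := (emk g)(e := EDashed),
        rt := rt g - {v, c}\<rparr> | c e. c \<notin> V g \<and> e \<notin> E g})"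
| "app Count g m = (let v = m ! 0; u = m ! 1 in
     {g\<lparr>nlab := (nlab g)(v := nlab g v @ [AStr ''f''], u := [AInt (i + 1)]),
        nmk := (nmk g)(v := NBlue)\<rparr> | i. nlab g u = [AInt i]})"
| "app Decrement g m = (let u = m ! 0 in
     {g\<lparr>nlab := (nlab g)(u := [AInt (i - 1)])\<rparr> | i. nlab g u = [AInt i]})"
| "app Root1 g m = {g\<lparr>rt := insert (m ! 0) (rt g)\<rparr>}"
| "app NoDeg g m = {g\<lparr>nmk := (nmk g)(m ! 0 := NUnm), rt := rt g - {m ! 0}\<rparr>}"
| "app UnmarkedEdge g m = {g\<lparr>emk := (emk g)(m ! 2 := ERed)\<rparr>}"
| "app Unvisited g m = (let v = m ! 0; u = m ! 1; e = m ! 2 in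
     {g\<lparr>nlab := (nlab g)(u := y @ [AInt (s + w)])\<rparr> | x y s w.
        nlab g v = x @ [AInt s] \<and> nlab g u = y @ [AStr ''f''] \<and> elab g e = [AInt w]})"
| "app Reduce g m = (let v = m ! 0; u = m ! 1; e = m ! 2 in
     {g\<lparr>nlab := (nlab g)(u := y @ [AInt (s + w)])\<rparr> | x y s t w.
        nlab g v = x @ [AInt s] \<and> nlab g u = y @ [AInt t] \<and> elab g e = [AInt w] \<and> s + w < t})"
| "app Finish g m = {g\<lparr>emk := (emk g)(m ! 2 := EBlue)\<rparr>}"
| "app Unroot1 g m = {g\<lparr>nmk := (nmk g)(m ! 0 := NGrey), rt := rt g - {m ! 0}\<rparr>}"
| "app Root2 g m = {g\<lparr>nmk := (nmk g)(m ! 0 := NBlue), rt := insert (m ! 0) (rt g)\<rparr>}"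
| "app UnmarkEdge g m = {g\<lparr>emk := (emk g)(m ! 2 := EUnm)\<rparr>}"
| "app Unroot2 g m = {g\<lparr>rt := rt g - {m ! 0}\<rparr>}"
| "app SetFlag g m = {g\<lparr>nlab := (nlab g)(m ! 0 := [AInt (-1)])\<rparr>}"
| "app Flag g m = {g}"
| "app DeleteCounter g m = {g\<lparr>V := V g - {m ! 1}, E := E g - {m ! 2},
        rt := insert (m ! 0) (rt g - {m ! 1})\<rparr>}"
| "app NoDegInv g m = {g\<lparr>nmk := (nmk g)(m ! 0 := NGrey)\<rparr>}"

text \<open>One rule application: the search cost, plus constant 1 for completing the
  application once a match is found.\<close>
definition rule_step :: "rule \<Rightarrow> hgraph \<Rightarrow> (hgraph option \<times> nat) set" where
  "rule_step r g = {(None, c) | c. (None, c) \<in> search r g} \<union>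
     {(Some g', Suc c) | m c g'. (Some m, c) \<in> search r g \<and> g' \<in> app r g m}"

text \<open>A rule set call: the compiled code tries the rules in the given order.\<close>
fun set_step :: "rule list \<Rightarrow> hgraph \<Rightarrow> (hgraph option \<times> nat) set" where
  "set_step [] g = {(None, 0)}"
| "set_step (r # rs) g = {(Some g', c) | g' c. (Some g', c) \<in> rule_step r g} \<union>
     {(res, c + c') | c res c'. (None, c) \<in> rule_step r g \<and> (res, c') \<in> set_step rs g}"

datatype cmd = Call "rule list" | Seq cmd cmd | Loop cmd | Try cmd cmd cmd
  | IfC cmd cmd cmd | Fail | Skip

text \<open>Outcome of running a command with a time budget b: Done (Some g') b' (success with
  result g' and remaining budget b'), Done None b' (failure), or Out (the execution needs
  more than the budget, in particular when it does not terminate).\<close>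
datatype outcome = Done "hgraph option" nat | Out

inductive exec :: "cmd \<Rightarrow> hgraph \<Rightarrow> nat \<Rightarrow> outcome \<Rightarrow> bool" where
  call_ok:   "(res, c) \<in> set_step rs g \<Longrightarrow> c \<le> b \<Longrightarrow> exec (Call rs) g b (Done res (b - c))"
| call_out:  "(res, c) \<in> set_step rs g \<Longrightarrow> b < c \<Longrightarrow> exec (Call rs) g b Out"
| seq_out:   "exec P g b Out \<Longrightarrow> exec (Seq P Q) g b Out"
| seq_fail:  "exec P g b (Done None b') \<Longrightarrow> exec (Seq P Q) g b (Done None b')"
| seq_ok:    "exec P g b (Done (Some g') b') \<Longrightarrow> exec Q g' b' r \<Longrightarrow> exec (Seq P Q) g b r"
| loop_out:  "exec P g b Out \<Longrightarrow> exec (Loop P) g b Out"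
| loop_stop: "exec P g b (Done None b') \<Longrightarrow> exec (Loop P) g b (Done (Some g) b')"
| loop_step: "exec P g b (Done (Some g') b') \<Longrightarrow> exec (Loop P) g' b' r \<Longrightarrow> exec (Loop P) g b r"
| try_out:   "exec C g b Out \<Longrightarrow> exec (Try C P Q) g b Out"
| try_then:  "exec C g b (Done (Some g') b') \<Longrightarrow> exec P g' b' r \<Longrightarrow> exec (Try C P Q) g b r"
| try_else:  "exec C g b (Done None b') \<Longrightarrow> exec Q g b' r \<Longrightarrow> exec (Try C P Q) g b r"
| if_out:    "exec C g b Out \<Longrightarrow> exec (IfC C P Q) g b Out"
| if_then:   "exec C g b (Done (Some g') b') \<Longrightarrow> exec P g b' r \<Longrightarrow> exec (IfC C P Q) g b r"
| if_else:   "exec C g b (Done None b') \<Longrightarrow> exec Q g b' r \<Longrightarrow> exec (IfC C P Q) g b r"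
| fail:      "exec Fail g b (Done None b)"
| skip:      "exec Skip g b (Done (Some g) b)"

abbreviation R :: "rule \<Rightarrow> cmd" where "R r \<equiv> Call [r]"

definition Relax :: cmd where
  "Relax = Seq (R Root1)
     (Try (R NoDeg) Skip
        (Seq (Loop (Seq (R UnmarkedEdge)
                        (Seq (Try (Call [Unvisited, Reduce]) Skip Skip) (R Finish))))
             (R Unroot1)))"

definition Clean :: cmd where
  "Clean = Seq (R Root2) (Seq (Loop (R UnmarkEdge)) (R Unroot2))"

definition Final :: cmd where
  "Final = Seq (Loop (Seq (R Root1)
                  (Seq (Loop (Seq (R UnmarkedEdge)
                                  (Seq (IfC (R Reduce) (R SetFlag) Skip) (R Finish))))
                       (R Unroot1))))
          (Seq (IfC (R Flag) Fail Skip)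
               (Seq (R DeleteCounter) (Loop (R NoDegInv))))"

definition bellman_ford :: cmd where
  "bellman_ford = Seq (R SetCounter)
     (Seq (Loop (R Count))
        (Seq (Loop (Seq (R Decrement) (Seq (Loop Relax) (Loop Clean)))) Final))"

definition bf_input :: "hgraph \<Rightarrow> bool" where
  "bf_input g \<longleftrightarrow> wf_graph g \<and>
     (\<forall>v\<in>V g. nmk g v = NGrey) \<and> card (rt g) = 1 \<and>
     (\<forall>e\<in>E g. emk g e = EUnm \<and> is_int_label (elab g e) \<and> src g e \<noteq> tgt g e)"

end

(*
  Every rule call of bellman-ford is matched in constant time. The search plans scan the
  root list, the green nodes and the red and dashed out-edges of a node exhaustively, and the
  program never has more than one of each: one root at a time, a single green counter node
  with a single dashed edge, at most one red edge. All other lists are only scanned up to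
  their first entry, which always matches. So every rule call costs at most 7 operations and
  it remains to count rule calls, which is done with a Hoare logic whose assertions carry the
  remaining budget as a potential.

  Count sets the counter to n - 1, the number of rounds of the main loop. The first Relax
  turns every isolated node into an unmarked node, so from then on only the at most 2m
  non-isolated nodes are ever blue or grey, and a round (decrement; Relax!; Clean!) handles
  each of them and each edge a bounded number of times: O(m) rule calls per round. With
  O(n + m) calls for set_counter, count, the first round and Final, the total cost is at
  most 1000 n (m + 1).
*)

theory Submission
  imports Defs
begin

section \<open>Budgeted Hoare logic\<close>

type_synonym assn = "hgraph \<Rightarrow> nat \<Rightarrow> bool"

text \<open>A failed command yields no graph, so the failure assertion constrains the input graph
  and the remaining budget.\<close>
definition hoare :: "assn \<Rightarrow> cmd \<Rightarrow> assn \<Rightarrow> assn \<Rightarrow> bool" where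
  "hoare P c Q F \<longleftrightarrow> (\<forall>g b. P g b \<longrightarrow> (\<exists>r. exec c g b r) \<and> \<not> exec c g b Out \<and>
     (\<forall>g' b'. exec c g b (Done (Some g') b') \<longrightarrow> Q g' b') \<and>
     (\<forall>b'. exec c g b (Done None b') \<longrightarrow> F g b'))"

inductive_cases exec_SeqE_Out: "exec (Seq c1 c2) g b Out"
inductive_cases exec_SeqE_Some: "exec (Seq c1 c2) g b (Done (Some g') b')"
inductive_cases exec_SeqE_None: "exec (Seq c1 c2) g b (Done None b')"
inductive_cases exec_LoopE_Out: "exec (Loop c) g b Out"
inductive_cases exec_LoopE_Some: "exec (Loop c) g b (Done (Some g') b')"
inductive_cases exec_LoopE_None: "exec (Loop c) g b (Done None b')"
inductive_cases exec_TryE_Out: "exec (Try c p q) g b Out"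
inductive_cases exec_TryE_Some: "exec (Try c p q) g b (Done (Some g') b')"
inductive_cases exec_TryE_None: "exec (Try c p q) g b (Done None b')"
inductive_cases exec_IfCE_Out: "exec (IfC c p q) g b Out"
inductive_cases exec_IfCE_Some: "exec (IfC c p q) g b (Done (Some g') b')"
inductive_cases exec_IfCE_None: "exec (IfC c p q) g b (Done None b')"
inductive_cases exec_CallE: "exec (Call rs) g b r"
inductive_cases exec_SkipE: "exec Skip g b r"
inductive_cases exec_FailE: "exec Fail g b r"

lemma hoare_conseq:
  assumes "hoare P c Q F"
    and "\<And>g b. P' g b \<Longrightarrow> P g b" "\<And>g b. Q g b \<Longrightarrow> Q' g b" "\<And>g b. F g b \<Longrightarrow> F' g b"
  shows "hoare P' c Q' F'"
  using assms unfolding hoare_def by meson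

lemma hoare_exists: "(\<And>x. hoare (P x) c Q F) \<Longrightarrow> hoare (\<lambda>g b. \<exists>x. P x g b) c Q F"
  unfolding hoare_def by blast

lemma hoareD:
  assumes "hoare P c Q F" and "P g b"
  shows hoare_not_Out: "\<not> exec c g b Out"
    and hoare_Some: "exec c g b (Done (Some g') b') \<Longrightarrow> Q g' b'"
    and hoare_None: "exec c g b (Done None b') \<Longrightarrow> F g b'"
  using assms unfolding hoare_def by blast+

lemma hoare_outcome:
  assumes "hoare P c Q F" and "P g b"
  obtains g' b' where "exec c g b (Done (Some g') b')" "Q g' b'"
    | b' where "exec c g b (Done None b')" "F g b'"
proof -
  from assms obtain r where r: "exec c g b r" and "r \<noteq> Out"
    unfolding hoare_def by blast
  then obtain x b' where "r = Done x b'" by (cases r) auto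
  with r assms that show thesis unfolding hoare_def by (cases x) blast+
qed

lemma hoare_call:
  assumes "\<And>g b. P g b \<Longrightarrow> set_step rs g \<noteq> {}"
    and "\<And>g b res c. P g b \<Longrightarrow> (res, c) \<in> set_step rs g \<Longrightarrow>
      c \<le> b \<and> (\<forall>g'. res = Some g' \<longrightarrow> Q g' (b - c)) \<and> (res = None \<longrightarrow> F g (b - c))"
  shows "hoare P (Call rs) Q F"
  unfolding hoare_def
  apply (intro allI impI conjI)
  subgoal for g b using assms(1)[of g b] assms(2)[of g b] by (fastforce intro: exec.intros)
  subgoal for g b by (auto elim!: exec_CallE dest: assms(2)[of g b])
  subgoal for g b by (auto elim!: exec_CallE dest: assms(2)[of g b])
  subgoal for g b by (auto elim!: exec_CallE dest: assms(2)[of g b])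
  done

lemma hoare_seq:
  assumes c1: "hoare P c1 Q F1" and c2: "hoare Q c2 S F2"
    and "\<And>g b. F1 g b \<Longrightarrow> F g b" and "\<And>g g' b. F2 g' b \<Longrightarrow> F g b"
  shows "hoare P (Seq c1 c2) S F"
  unfolding hoare_def
proof (intro allI impI conjI)
  fix g b assume "P g b"
  show "\<exists>r. exec (Seq c1 c2) g b r"
  proof (rule hoare_outcome[OF c1 \<open>P g b\<close>])
    fix g' b' assume "exec c1 g b (Done (Some g') b')" "Q g' b'"
    moreover obtain r where "exec c2 g' b' r" using c2 \<open>Q g' b'\<close> unfolding hoare_def by blast
    ultimately show ?thesis by (blast intro: exec.seq_ok)
  next
    fix b' assume "exec c1 g b (Done None b')"
    then show ?thesis by (blast intro: exec.seq_fail)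
  qed
  show "\<not> exec (Seq c1 c2) g b Out"
    using c1 c2 \<open>P g b\<close> unfolding hoare_def by (blast elim: exec_SeqE_Out)
  show "S g' b'" if "exec (Seq c1 c2) g b (Done (Some g') b')" for g' b'
    using that c1 c2 \<open>P g b\<close> unfolding hoare_def by (blast elim: exec_SeqE_Some)
  show "F g b'" if "exec (Seq c1 c2) g b (Done None b')" for b'
    using that assms \<open>P g b\<close> unfolding hoare_def by (blast elim: exec_SeqE_None)
qed

lemma hoare_try:
  assumes C: "hoare P C Q1 F1" and T: "hoare Q1 T S (\<lambda>_ _. False)"
    and El: "hoare F1 El S (\<lambda>_ _. False)"
  shows "hoare P (Try C T El) S (\<lambda>_ _. False)"
  unfolding hoare_def
proof (intro allI impI conjI)
  fix g b assume "P g b"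
  show "\<exists>r. exec (Try C T El) g b r"
  proof (rule hoare_outcome[OF C \<open>P g b\<close>])
    fix g' b' assume "exec C g b (Done (Some g') b')" "Q1 g' b'"
    moreover obtain r where "exec T g' b' r" using T \<open>Q1 g' b'\<close> unfolding hoare_def by blast
    ultimately show ?thesis by (blast intro: exec.try_then)
  next
    fix b' assume "exec C g b (Done None b')" "F1 g b'"
    moreover obtain r where "exec El g b' r" using El \<open>F1 g b'\<close> unfolding hoare_def by blast
    ultimately show ?thesis by (blast intro: exec.try_else)
  qed
  show "\<not> exec (Try C T El) g b Out"
    using assms \<open>P g b\<close> unfolding hoare_def by (blast elim: exec_TryE_Out)
  show "S g' b'" if "exec (Try C T El) g b (Done (Some g') b')" for g' b'
    using that assms \<open>P g b\<close> unfolding hoare_def by (blast elim: exec_TryE_Some)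
  show False if "exec (Try C T El) g b (Done None b')" for b'
    using that assms \<open>P g b\<close> unfolding hoare_def by (blast elim: exec_TryE_None)
qed

text \<open>The condition of an if-command runs on a copy, so its postcondition may only
  speak about the original graph g0.\<close>
lemma hoare_if:
  assumes C: "\<And>g0. hoare (\<lambda>g b. P g b \<and> g = g0) C (\<lambda>_ b. T g0 b) El"
    and Pc: "hoare T Pc S Fa" and Qc: "hoare El Qc S Fb"
  shows "hoare P (IfC C Pc Qc) S (\<lambda>g b. Fa g b \<or> Fb g b)"
  unfolding hoare_def
proof (intro allI impI conjI)
  fix g b assume "P g b"
  then have C_g: "P g b \<and> g = g" by simp
  note C_not_Out = hoare_not_Out[OF C C_g] and C_Some = hoare_Some[OF C C_g]
    and C_None = hoare_None[OF C C_g]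
  show "\<exists>r. exec (IfC C Pc Qc) g b r"
  proof (rule hoare_outcome[OF C C_g])
    fix g' b' assume "exec C g b (Done (Some g') b')" "T g b'"
    moreover obtain r where "exec Pc g b' r" using Pc \<open>T g b'\<close> unfolding hoare_def by blast
    ultimately show ?thesis by (blast intro: exec.if_then)
  next
    fix b' assume "exec C g b (Done None b')" "El g b'"
    moreover obtain r where "exec Qc g b' r" using Qc \<open>El g b'\<close> unfolding hoare_def by blast
    ultimately show ?thesis by (blast intro: exec.if_else)
  qed
  show "\<not> exec (IfC C Pc Qc) g b Out"
    by (rule notI, erule exec_IfCE_Out)
      (use C_not_Out C_Some C_None hoare_not_Out[OF Pc] hoare_not_Out[OF Qc] in blast)+
  show "S g' b'" if "exec (IfC C Pc Qc) g b (Done (Some g') b')" for g' b'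
    using that by (rule exec_IfCE_Some)
      (use C_Some C_None hoare_Some[OF Pc] hoare_Some[OF Qc] in blast)+
  show "Fa g b' \<or> Fb g b'" if "exec (IfC C Pc Qc) g b (Done None b')" for b'
    using that by (rule exec_IfCE_None)
      (use C_Some C_None hoare_None[OF Pc] hoare_None[OF Qc] in blast)+
qed

lemma hoare_skip: "hoare P Skip P F"
  unfolding hoare_def by (auto intro: exec.intros elim!: exec_SkipE)

lemma hoare_fail: "hoare P Fail Q P"
  unfolding hoare_def by (auto intro: exec.intros elim!: exec_FailE)

lemma scan_list_cost_pos: "p \<in> scan_list xs k \<Longrightarrow> 0 < snd p"
  by (induction xs arbitrary: p) auto

lemma scan_cost_pos: "p \<in> scan S k \<Longrightarrow> 0 < snd p"
  unfolding scan_def using scan_list_cost_pos by blast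

lemma search_cost_pos: "p \<in> search r g \<Longrightarrow> 0 < snd p"
  by (cases r) (auto dest: scan_cost_pos)

lemma rule_step_cost_pos: "(res, c) \<in> rule_step r g \<Longrightarrow> 0 < c"
  unfolding rule_step_def by (auto dest: search_cost_pos)

lemma set_step_cost_pos: "rs \<noteq> [] \<Longrightarrow> (res, c) \<in> set_step rs g \<Longrightarrow> 0 < c"
  by (cases rs) (auto dest: rule_step_cost_pos)

lemma exec_Done_budget_le: "exec c g b (Done x b') \<Longrightarrow> b' \<le> b"
proof -
  have "exec c g b r \<Longrightarrow> r = Done x b' \<Longrightarrow> b' \<le> b" for r
    by (induction arbitrary: x b' rule: exec.induct) force+
  then show "exec c g b (Done x b') \<Longrightarrow> b' \<le> b" by blast
qed

fun starts_call :: "cmd \<Rightarrow> bool" where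
  "starts_call (Call rs) = (rs \<noteq> [])"
| "starts_call (Seq c1 c2) = starts_call c1"
| "starts_call _ = False"

lemma exec_starts_call_budget_less:
  "exec c g b (Done (Some g') b') \<Longrightarrow> starts_call c \<Longrightarrow> b' < b"
proof (induction c arbitrary: g b g' b')
  case (Call rs)
  then show ?case by (auto elim!: exec_CallE dest: set_step_cost_pos)
next
  case (Seq c1 c2)
  from Seq.prems(1) obtain g1 b1
    where "exec c1 g b (Done (Some g1) b1)" and "exec c2 g1 b1 (Done (Some g') b')"
    by (rule exec_SeqE_Some)
  then have "b1 < b" and "b' \<le> b1"
    using Seq.IH(1) Seq.prems(2) exec_Done_budget_le by auto
  then show ?case by simp
qed auto

text \<open>A successful iteration of a body starting with a rule call consumes budget, so the
  loop is proved by induction on the budget.\<close>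
lemma hoare_loop:
  assumes "starts_call c" and body: "hoare I c I F"
  shows "hoare I (Loop c) F (\<lambda>_ _. False)"
  unfolding hoare_def
proof (intro allI impI)
  fix g b assume "I g b"
  then show "(\<exists>r. exec (Loop c) g b r) \<and> \<not> exec (Loop c) g b Out \<and>
      (\<forall>g' b'. exec (Loop c) g b (Done (Some g') b') \<longrightarrow> F g' b') \<and>
      (\<forall>b'. exec (Loop c) g b (Done None b') \<longrightarrow> False)"
  proof (induction b arbitrary: g rule: less_induct)
    case (less b)
    have next_iter: "b' < b \<and> I g' b'" if "exec c g b (Done (Some g') b')" for g' b'
      using that hoare_Some[OF body less.prems] exec_starts_call_budget_less assms(1) by blast
    have "\<exists>r. exec (Loop c) g b r"
    proof (rule hoare_outcome[OF body less.prems])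
      fix g' b' assume "exec c g b (Done (Some g') b')"
      moreover from this obtain r where "exec (Loop c) g' b' r"
        using next_iter less.IH by blast
      ultimately show ?thesis by (blast intro: exec.loop_step)
    next
      fix b' assume "exec c g b (Done None b')"
      then show ?thesis by (blast intro: exec.loop_stop)
    qed
    moreover have "\<not> exec (Loop c) g b Out"
      by (rule notI, erule exec_LoopE_Out)
        (use hoare_not_Out[OF body less.prems] next_iter less.IH in blast)+
    moreover have "F g' b'" if "exec (Loop c) g b (Done (Some g') b')" for g' b'
      using that by (rule exec_LoopE_Some)
        (use hoare_None[OF body less.prems] next_iter less.IH in blast)+
    moreover have False if "exec (Loop c) g b (Done None b')" for b'
      using that by (rule exec_LoopE_None) (use next_iter less.IH in blast)
    ultimately show ?case by blast
  qed
qed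

section \<open>Constant-time matching\<close>

lemma scan_list_SomeD: "(Some r, c) \<in> scan_list xs k \<Longrightarrow> \<exists>x\<in>set xs. \<exists>c'. (Some r, c') \<in> k x"
  by (induction xs arbitrary: c) auto

lemma scan_list_NoneD: "(None, c) \<in> scan_list xs k \<Longrightarrow> x \<in> set xs \<Longrightarrow> \<exists>c'. (None, c') \<in> k x"
  by (induction xs arbitrary: c) auto

lemma scan_SomeD: "(Some r, c) \<in> scan S k \<Longrightarrow> \<exists>x\<in>S. \<exists>c'. (Some r, c') \<in> k x"
  unfolding scan_def by (auto dest: scan_list_SomeD)

lemma scan_NoneD: "(None, c) \<in> scan S k \<Longrightarrow> x \<in> S \<Longrightarrow> \<exists>c'. (None, c') \<in> k x"
  unfolding scan_def by (auto dest: scan_list_NoneD)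

lemma scan_list_nonempty: "(\<And>x. x \<in> set xs \<Longrightarrow> k x \<noteq> {}) \<Longrightarrow> scan_list xs k \<noteq> {}"
proof (induction xs)
  case (Cons x xs)
  then obtain res c where p: "(res, c) \<in> k x" by fastforce
  show ?case
  proof (cases res)
    case None
    from Cons obtain q where "q \<in> scan_list xs k" by fastforce
    with p None show ?thesis by (cases q) auto
  next
    case Some
    with p show ?thesis by auto
  qed
qed simp

lemma scan_nonempty: "finite S \<Longrightarrow> (\<And>x. x \<in> S \<Longrightarrow> k x \<noteq> {}) \<Longrightarrow> scan S k \<noteq> {}"
  unfolding scan_def using finite_distinct_list[of S] scan_list_nonempty[of _ k] by auto

lemma chk_nonempty: "K \<noteq> {} \<Longrightarrow> chk P K \<noteq> {}"
  unfolding chk_def by auto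

lemma found_nonempty: "found r \<noteq> {}"
  unfolding found_def by auto

lemma chk_Some_iff [simp]:
  "(Some r, c) \<in> chk P K \<longleftrightarrow> P \<and> (\<exists>c'. c = Suc c' \<and> (Some r, c') \<in> K)"
  unfolding chk_def by auto

lemma chk_None_iff [simp]:
  "(None, c) \<in> chk P K \<longleftrightarrow> (P \<and> (\<exists>c'. c = Suc c' \<and> (None, c') \<in> K)) \<or> (\<not> P \<and> c = 1)"
  unfolding chk_def by auto

lemma found_iff [simp]: "(Some r, c) \<in> found r' \<longleftrightarrow> r = r' \<and> c = 0" "(None, c) \<notin> found r'"
  unfolding found_def by auto

definition cost_le :: "nat \<Rightarrow> ('a \<times> nat) set \<Rightarrow> bool" where
  "cost_le K S \<longleftrightarrow> (\<forall>p\<in>S. snd p \<le> K)"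

definition never_fails :: "('a option \<times> nat) set \<Rightarrow> bool" where
  "never_fails S \<longleftrightarrow> (\<forall>p\<in>S. fst p \<noteq> None)"

lemma cost_le_found: "cost_le K (found r)"
  unfolding cost_le_def found_def by auto

lemma cost_le_chk: "0 < K \<Longrightarrow> cost_le (K - 1) k \<Longrightarrow> cost_le K (chk P k)"
  unfolding cost_le_def chk_def by auto

lemma never_fails_found [simp]: "never_fails (found r)"
  unfolding never_fails_def found_def by auto

lemma never_fails_chk_iff [simp]: "never_fails (chk P k) \<longleftrightarrow> P \<and> never_fails k"
  unfolding never_fails_def chk_def by auto

lemma never_fails_scan:
  assumes "S \<noteq> {}" and "\<And>x. x \<in> S \<Longrightarrow> never_fails (k x)"
  shows "never_fails (scan S k)"
proof -
  from assms(1) obtain x where "x \<in> S" by blast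
  have "(None, c) \<notin> scan S k" for c
    using scan_NoneD[of c S k x] \<open>x \<in> S\<close> assms(2)[OF \<open>x \<in> S\<close>]
    unfolding never_fails_def by fastforce
  then show ?thesis unfolding never_fails_def by (metis prod.collapse)
qed

lemma cost_le_scan_list:
  assumes "\<And>x. x \<in> set xs \<Longrightarrow> cost_le K (k x)"
    and "length xs \<le> 1 \<or> (\<forall>x\<in>set xs. never_fails (k x))"
  shows "cost_le (Suc (Suc K)) (scan_list xs k)"
proof (cases "length xs \<le> 1")
  case True
  with assms(1) show ?thesis by (cases xs) (auto simp: cost_le_def)
next
  case False
  then obtain x xs' where "xs = x # xs'" by (cases xs) auto
  with assms show ?thesis unfolding cost_le_def never_fails_def by fastforce
qed

text \<open>A scan pays for at most one candidate: either there is only one, or the first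
  candidate already succeeds.\<close>
lemma cost_le_scan:
  assumes "2 \<le> K" and "card S \<le> 1 \<or> (\<forall>x\<in>S. never_fails (k x))"
    and "\<And>x. x \<in> S \<Longrightarrow> cost_le (K - 2) (k x)"
  shows "cost_le K (scan S k)"
proof -
  have "cost_le (Suc (Suc (K - 2))) (scan_list xs k)" if "distinct xs" "set xs = S" for xs
    using cost_le_scan_list[of xs "K - 2" k] assms(2,3) that distinct_card[of xs] by auto
  moreover have "Suc (Suc (K - 2)) = K" using assms(1) by simp
  ultimately show ?thesis unfolding scan_def cost_le_def by fastforce
qed

text \<open>The items whose lists are scanned without a guarantee of early success.\<close>
definition few_candidates :: "hgraph \<Rightarrow> bool" where
  "few_candidates g \<longleftrightarrow> card (roots g) \<le> 1 \<and> card (nodes_mk g NGreen) \<le> 1 \<and>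
     (\<forall>v. card (out_mk g v ERed) \<le> 1) \<and> (\<forall>v. card (out_mk g v EDashed) \<le> 1)"

lemma search_cost_le: "few_candidates g \<Longrightarrow> r \<noteq> Count \<Longrightarrow> cost_le 6 (search r g)"
  by (cases r; simp; intro cost_le_scan cost_le_chk cost_le_found; simp add: few_candidates_def)

lemma search_NoDegInv_cost_le: "cost_le 6 (search NoDegInv g)"
  by simp (intro cost_le_scan cost_le_chk cost_le_found; simp)

lemma search_Count_cost_le:
  assumes "few_candidates g" and "nodes_mk g NGreen = {u}" and "is_int_label (nlab g u)"
  shows "cost_le 6 (search Count g)"
proof -
  have "never_fails (scan {u} (\<lambda>u'. chk (is_int_label (nlab g u')) (found [v, u'])))" for v
    using assms(3) by (intro never_fails_scan) auto
  with assms show ?thesis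
    by simp (intro cost_le_scan cost_le_chk cost_le_found disjI2 ballI;
      simp add: few_candidates_def)
qed

lemma rule_step_Some_iff:
  "(Some g', c) \<in> rule_step r g \<longleftrightarrow> (\<exists>m c0. c = Suc c0 \<and> (Some m, c0) \<in> search r g \<and> g' \<in> app r g m)"
  unfolding rule_step_def by auto

lemma rule_step_None_iff: "(None, c) \<in> rule_step r g \<longleftrightarrow> (None, c) \<in> search r g"
  unfolding rule_step_def by auto

lemma rule_step_cost_le: "cost_le K (search r g) \<Longrightarrow> cost_le (Suc K) (rule_step r g)"
  unfolding cost_le_def rule_step_def by auto

lemma set_step_single: "set_step [r] g = rule_step r g"
proof -
  have "p \<in> set_step [r] g \<longleftrightarrow> p \<in> rule_step r g" for p
    by (cases p; cases "fst p") auto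
  then show ?thesis by blast
qed

lemma set_step_pair: "set_step [r1, r2] g =
    {(Some g', c) | g' c. (Some g', c) \<in> rule_step r1 g} \<union>
    {(res, c + c') | c res c'. (None, c) \<in> rule_step r1 g \<and> (res, c') \<in> rule_step r2 g}"
  by (simp only: set_step.simps(2)[of r1 "[r2]" g] set_step_single)

lemma search_nonempty: "finite (V g) \<Longrightarrow> finite (E g) \<Longrightarrow> search r g \<noteq> {}"
  by (induction r; simp only: search.simps; intro scan_nonempty chk_nonempty found_nonempty;
      simp add: nodes_mk_def roots_def out_mk_def)

lemma app_nonempty:
  assumes "(Some m, c) \<in> search r g" and "finite (V g)" and "finite (E g)"
  shows "app r g m \<noteq> {}"
proof (cases r)
  case SetCounter
  obtain a where "a \<notin> V g" using ex_new_if_finite[OF infinite_UNIV_nat assms(2)] by blast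
  moreover obtain e where "e \<notin> E g" using ex_new_if_finite[OF infinite_UNIV_nat assms(3)] by blast
  ultimately show ?thesis using SetCounter by (auto simp: Let_def)
qed (use assms(1) in \<open>auto dest!: scan_SomeD simp: Let_def is_int_label_def int_suffix_def\<close>)

lemma rule_step_nonempty:
  assumes "finite (V g)" and "finite (E g)"
  shows "rule_step r g \<noteq> {}"
proof -
  obtain res c where p: "(res, c) \<in> search r g" using search_nonempty[OF assms] by fast
  show ?thesis
  proof (cases res)
    case None
    with p show ?thesis unfolding rule_step_def by auto
  next
    case (Some m)
    with p app_nonempty[of m c r g] assms show ?thesis unfolding rule_step_def by blast
  qed
qed

lemma hoare_rule:
  assumes "\<And>g b. P g b \<Longrightarrow> finite (V g) \<and> finite (E g) \<and> cost_le 6 (search r g) \<and> 7 \<le> b"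
    and "\<And>g b m c g' b'. P g b \<Longrightarrow> (Some m, c) \<in> search r g \<Longrightarrow> g' \<in> app r g m \<Longrightarrow>
      b \<le> b' + 7 \<Longrightarrow> Q g' b'"
    and "\<And>g b c b'. P g b \<Longrightarrow> (None, c) \<in> search r g \<Longrightarrow> b \<le> b' + 7 \<Longrightarrow> F g b'"
  shows "hoare P (R r) Q F"
proof (rule hoare_call)
  fix g b assume "P g b"
  then show "set_step [r] g \<noteq> {}"
    unfolding set_step_single using assms(1) rule_step_nonempty by blast
next
  fix g b res c assume P: "P g b" and "(res, c) \<in> set_step [r] g"
  then have step: "(res, c) \<in> rule_step r g" by (simp only: set_step_single)
  have "c \<le> 7" "7 \<le> b"
    using assms(1)[OF P] rule_step_cost_le[of 6 r g] step unfolding cost_le_def by force+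
  moreover have "Q g' (b - c)" if "res = Some g'" for g'
    using that step assms(2)[OF P] \<open>c \<le> 7\<close> by (auto simp: rule_step_Some_iff)
  moreover have "F g (b - c)" if "res = None"
    using that step assms(3)[OF P] \<open>c \<le> 7\<close> by (auto simp: rule_step_None_iff)
  ultimately show "c \<le> b \<and> (\<forall>g'. res = Some g' \<longrightarrow> Q g' (b - c)) \<and> (res = None \<longrightarrow> F g (b - c))"
    by auto
qed

lemma hoare_rule_pair:
  assumes "\<And>g b. P g b \<Longrightarrow> finite (V g) \<and> finite (E g) \<and>
      cost_le 6 (search r1 g) \<and> cost_le 6 (search r2 g) \<and> 14 \<le> b"
    and "\<And>g b r m c g' b'. P g b \<Longrightarrow> r \<in> {r1, r2} \<Longrightarrow> (Some m, c) \<in> search r g \<Longrightarrow>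
      g' \<in> app r g m \<Longrightarrow> b \<le> b' + 14 \<Longrightarrow> Q g' b'"
    and "\<And>g b b'. P g b \<Longrightarrow> b \<le> b' + 14 \<Longrightarrow> F g b'"
  shows "hoare P (Call [r1, r2]) Q F"
proof (rule hoare_call)
  fix g b assume P: "P g b"
  then have "rule_step r1 g \<noteq> {}" and "rule_step r2 g \<noteq> {}"
    using assms(1) rule_step_nonempty by auto
  then obtain res1 c1 res2 c2
    where "(res1, c1) \<in> rule_step r1 g" and "(res2, c2) \<in> rule_step r2 g" by fast
  then show "set_step [r1, r2] g \<noteq> {}"
    unfolding set_step_pair by (cases res1) auto
next
  fix g b res c assume P: "P g b" and step: "(res, c) \<in> set_step [r1, r2] g"
  have "cost_le 7 (rule_step r1 g)" and "cost_le 7 (rule_step r2 g)"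
    using assms(1)[OF P] rule_step_cost_le[of 6] by simp_all
  then have "c \<le> 14" using step unfolding set_step_pair cost_le_def by fastforce
  moreover have "Q g' (b - c)" if "res = Some g'" for g'
  proof -
    from that step obtain r c' where r: "r \<in> {r1, r2}" and "(Some g', c') \<in> rule_step r g"
      unfolding set_step_pair by blast
    then obtain m c0 where "(Some m, c0) \<in> search r g" and "g' \<in> app r g m"
      unfolding rule_step_Some_iff by blast
    with r show ?thesis by (rule assms(2)[OF P]) (use \<open>c \<le> 14\<close> in simp)
  qed
  moreover have "F g (b - c)" using assms(3)[OF P] \<open>c \<le> 14\<close> by simp
  ultimately show "c \<le> b \<and> (\<forall>g'. res = Some g' \<longrightarrow> Q g' (b - c)) \<and> (res = None \<longrightarrow> F g (b - c))"
    using assms(1)[OF P] by auto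
qed

lemma search_SetCounter_SomeD:
  "(Some m, c) \<in> search SetCounter g \<Longrightarrow> \<exists>v\<in>roots g. nmk g v = NGrey \<and> m = [v]"
  by (auto dest!: scan_SomeD)
lemma search_Count_SomeD: "(Some m, c) \<in> search Count g \<Longrightarrow>
    \<exists>v\<in>nodes_mk g NGrey. \<exists>u\<in>nodes_mk g NGreen. is_int_label (nlab g u) \<and> m = [v, u]"
  by (auto dest!: scan_SomeD)
lemma search_Count_NoneD: "(None, c) \<in> search Count g \<Longrightarrow> v \<in> nodes_mk g NGrey \<Longrightarrow>
    u \<in> nodes_mk g NGreen \<Longrightarrow> \<not> is_int_label (nlab g u)"
  by (auto dest!: scan_NoneD)
lemma search_Decrement_SomeD: "(Some m, c) \<in> search Decrement g \<Longrightarrow>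
    \<exists>u\<in>nodes_mk g NGreen. (\<exists>i. nlab g u = [AInt i] \<and> i > 0) \<and> m = [u]"
  by (auto dest!: scan_SomeD)
lemma search_Decrement_NoneD: "(None, c) \<in> search Decrement g \<Longrightarrow> u \<in> nodes_mk g NGreen \<Longrightarrow>
    \<not> (\<exists>i. nlab g u = [AInt i] \<and> i > 0)"
  by (auto dest!: scan_NoneD)
lemma search_Root1_SomeD: "(Some m, c) \<in> search Root1 g \<Longrightarrow> \<exists>v\<in>nodes_mk g NBlue. m = [v]"
  by (auto dest!: scan_SomeD)
lemma search_Root1_NoneD: "(None, c) \<in> search Root1 g \<Longrightarrow> nodes_mk g NBlue = {}"
  by (rule equals0I) (auto dest: scan_NoneD)
lemma search_NoDeg_SomeD: "(Some m, c) \<in> search NoDeg g \<Longrightarrow>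
    \<exists>v\<in>roots g. nmk g v = NBlue \<and> (\<forall>e\<in>E g. src g e \<noteq> v \<and> tgt g e \<noteq> v) \<and> m = [v]"
  by (auto dest!: scan_SomeD)
lemma search_NoDeg_NoneD: "(None, c) \<in> search NoDeg g \<Longrightarrow> v \<in> roots g \<Longrightarrow> nmk g v = NBlue \<Longrightarrow>
    \<exists>e\<in>E g. src g e = v \<or> tgt g e = v"
  by (auto dest!: scan_NoneD)
lemma search_UnmarkedEdge_SomeD: "(Some m, c) \<in> search UnmarkedEdge g \<Longrightarrow>
    \<exists>v\<in>roots g. nmk g v = NBlue \<and> (\<exists>e\<in>out_mk g v EUnm. m = [v, tgt g e, e])"
  by (auto dest!: scan_SomeD)
lemma search_Unvisited_SomeD: "(Some m, c) \<in> search Unvisited g \<Longrightarrow>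
    \<exists>v\<in>roots g. \<exists>e\<in>out_mk g v ERed. m = [v, tgt g e, e]"
  by (auto dest!: scan_SomeD)
lemma search_Reduce_SomeD: "(Some m, c) \<in> search Reduce g \<Longrightarrow>
    \<exists>v\<in>roots g. \<exists>e\<in>out_mk g v ERed. m = [v, tgt g e, e]"
  by (auto dest!: scan_SomeD)
lemma search_Finish_SomeD: "(Some m, c) \<in> search Finish g \<Longrightarrow>
    \<exists>v\<in>roots g. nmk g v = NBlue \<and> (\<exists>e\<in>out_mk g v ERed. m = [v, tgt g e, e])"
  by (auto dest!: scan_SomeD)
lemma search_Finish_NoneD: "(None, c) \<in> search Finish g \<Longrightarrow> v \<in> roots g \<Longrightarrow> nmk g v = NBlue \<Longrightarrow>
    out_mk g v ERed = {}"
  by (auto dest!: scan_NoneD)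
lemma search_Unroot1_SomeD: "(Some m, c) \<in> search Unroot1 g \<Longrightarrow> \<exists>v\<in>roots g. nmk g v = NBlue \<and> m = [v]"
  by (auto dest!: scan_SomeD)
lemma search_Unroot1_NoneD: "(None, c) \<in> search Unroot1 g \<Longrightarrow> v \<in> roots g \<Longrightarrow> nmk g v \<noteq> NBlue"
  by (auto dest!: scan_NoneD)
lemma search_Root2_SomeD: "(Some m, c) \<in> search Root2 g \<Longrightarrow> \<exists>v\<in>nodes_mk g NGrey. m = [v]"
  by (auto dest!: scan_SomeD)
lemma search_Root2_NoneD: "(None, c) \<in> search Root2 g \<Longrightarrow> nodes_mk g NGrey = {}"
  by (rule equals0I) (auto dest: scan_NoneD)
lemma search_UnmarkEdge_SomeD: "(Some m, c) \<in> search UnmarkEdge g \<Longrightarrow>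
    \<exists>v\<in>roots g. nmk g v = NBlue \<and> (\<exists>e\<in>out_mk g v EBlue. m = [v, tgt g e, e])"
  by (auto dest!: scan_SomeD)
lemma search_Unroot2_SomeD: "(Some m, c) \<in> search Unroot2 g \<Longrightarrow> \<exists>v\<in>roots g. nmk g v = NBlue \<and> m = [v]"
  by (auto dest!: scan_SomeD)
lemma search_Unroot2_NoneD: "(None, c) \<in> search Unroot2 g \<Longrightarrow> v \<in> roots g \<Longrightarrow> nmk g v \<noteq> NBlue"
  by (auto dest!: scan_NoneD)
lemma search_SetFlag_SomeD: "(Some m, c) \<in> search SetFlag g \<Longrightarrow> \<exists>u\<in>nodes_mk g NGreen. m = [u]"
  by (auto dest!: scan_SomeD)
lemma search_SetFlag_NoneD: "(None, c) \<in> search SetFlag g \<Longrightarrow> nodes_mk g NGreen = {}"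
  by (rule equals0I) (auto dest: scan_NoneD)
lemma search_NoDegInv_SomeD: "(Some m, c) \<in> search NoDegInv g \<Longrightarrow> \<exists>v\<in>nodes_mk g NUnm. m = [v]"
  by (auto dest!: scan_SomeD)

lemma app_relabel: "g' \<in> app r g m \<Longrightarrow> r \<in> {Unvisited, Reduce} \<Longrightarrow>
    \<exists>l. g' = g\<lparr>nlab := (nlab g)(m ! 1 := l)\<rparr>"
  by (auto simp: Let_def)

definition edges_mk :: "hgraph \<Rightarrow> emark \<Rightarrow> nat set" where
  "edges_mk g \<mu> = {e \<in> E g. emk g e = \<mu>}"

definition non_isolated :: "hgraph \<Rightarrow> nat \<Rightarrow> bool" where
  "non_isolated g v \<longleftrightarrow> (\<exists>e\<in>E g. src g e = v \<or> tgt g e = v)"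

lemma finite_nodes_mk: "finite (V g) \<Longrightarrow> finite (nodes_mk g \<mu>)"
  unfolding nodes_mk_def by simp

lemma finite_edges_mk: "finite (E g) \<Longrightarrow> finite (edges_mk g \<mu>)"
  unfolding edges_mk_def by simp

lemma card_nodes_mk_le: "finite (V g) \<Longrightarrow> card (nodes_mk g \<mu>) \<le> card (V g)"
  unfolding nodes_mk_def by (rule card_mono) auto

lemma card_edges_mk_le: "finite (E g) \<Longrightarrow> card (edges_mk g \<mu>) \<le> card (E g)"
  unfolding edges_mk_def by (rule card_mono) auto

lemma card_remove: "finite A \<Longrightarrow> v \<in> A \<Longrightarrow> card (A - {v}) = card A - 1 \<and> card A \<ge> 1"
  using card_gt_0_iff[of A] by auto

lemma roots_eq_singleton: "rt g = {v} \<Longrightarrow> v \<in> V g \<Longrightarrow> roots g = {v}"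
  unfolding roots_def by auto

lemma Collect_fun_upd_eq: "{w \<in> A. (f(v := x)) w = \<mu>} =
  (if x = \<mu> then (if v \<in> A then insert v {w \<in> A. f w = \<mu>} else {w \<in> A. f w = \<mu>})
   else {w \<in> A. f w = \<mu>} - {v})"
  by auto

lemma card_non_isolated_le: "finite (E g) \<Longrightarrow> card {v. non_isolated g v} \<le> 2 * card (E g)"
proof -
  assume fin: "finite (E g)"
  have "{v. non_isolated g v} = src g ` E g \<union> tgt g ` E g" unfolding non_isolated_def by auto
  then have "card {v. non_isolated g v} \<le> card (src g ` E g) + card (tgt g ` E g)"
    by (simp add: card_Un_le)
  also have "\<dots> \<le> card (E g) + card (E g)" by (intro add_mono card_image_le fin)
  finally show ?thesis by simp
qed

abbreviation n_blue :: "hgraph \<Rightarrow> nat" where "n_blue g \<equiv> card (nodes_mk g NBlue)"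
abbreviation n_grey :: "hgraph \<Rightarrow> nat" where "n_grey g \<equiv> card (nodes_mk g NGrey)"
abbreviation n_unmarked :: "hgraph \<Rightarrow> nat" where "n_unmarked g \<equiv> card (edges_mk g EUnm)"
abbreviation n_blue_edges :: "hgraph \<Rightarrow> nat" where "n_blue_edges g \<equiv> card (edges_mk g EBlue)"

text \<open>The shape of the host graph between set_counter and delete_counter: the green
  counter node cn is attached to the rest only by its dashed edge d.\<close>
definition counter_graph :: "nat \<Rightarrow> nat \<Rightarrow> hgraph \<Rightarrow> bool" where
  "counter_graph cn d g \<longleftrightarrow> finite (V g) \<and> finite (E g) \<and>
     (\<forall>e\<in>E g. src g e \<in> V g \<and> tgt g e \<in> V g) \<and>
     cn \<in> V g \<and> d \<in> E g \<and> src g d = cn \<and> tgt g d \<noteq> cn \<and> emk g d = EDashed \<and>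
     nmk g cn = NGreen \<and> (\<forall>e\<in>E g. e \<noteq> d \<longrightarrow> src g e \<noteq> cn \<and> tgt g e \<noteq> cn \<and> emk g e \<noteq> EDashed) \<and>
     (\<forall>v\<in>V g. v \<noteq> cn \<longrightarrow> nmk g v \<noteq> NGreen) \<and> cn \<notin> rt g \<and> rt g \<subseteq> V g"

lemma counter_graph_finite:
  assumes "counter_graph cn d g"
  shows "finite (V g) \<and> finite (E g) \<and> card (E g) \<ge> 1 \<and> card (V g) \<ge> 1"
proof -
  from assms have "finite (V g)" "finite (E g)" "d \<in> E g" "cn \<in> V g"
    unfolding counter_graph_def by auto
  then show ?thesis using card_gt_0_iff[of "V g"] card_gt_0_iff[of "E g"] by auto
qed

lemma counter_graph_green: "counter_graph cn d g \<Longrightarrow> nodes_mk g NGreen = {cn}"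
  unfolding counter_graph_def nodes_mk_def by auto

lemma counter_graph_update:
  assumes "counter_graph cn d g" "V g' = V g" "E g' = E g" "src g' = src g" "tgt g' = tgt g"
    "nmk g' cn = NGreen" "\<forall>v\<in>V g. v \<noteq> cn \<longrightarrow> nmk g' v \<noteq> NGreen"
    "emk g' d = EDashed" "\<forall>e\<in>E g. e \<noteq> d \<longrightarrow> emk g' e \<noteq> EDashed" "cn \<notin> rt g'" "rt g' \<subseteq> V g"
  shows "counter_graph cn d g'"
  using assms unfolding counter_graph_def by auto

lemma few_candidates_if_counter_graph:
  assumes "counter_graph cn d g" "card (rt g) \<le> 1" "card (edges_mk g ERed) \<le> 1"
  shows "few_candidates g"
proof -
  have fin: "finite (E g)" and "rt g \<subseteq> V g" using assms(1) unfolding counter_graph_def by auto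
  then have "card (roots g) \<le> 1" using assms(2) unfolding roots_def by (simp add: Int_absorb2)
  moreover have "card (nodes_mk g NGreen) \<le> 1" using counter_graph_green[OF assms(1)] by simp
  moreover have "card (out_mk g v ERed) \<le> 1" for v
  proof -
    have "out_mk g v ERed \<subseteq> edges_mk g ERed" unfolding out_mk_def edges_mk_def by blast
    then have "card (out_mk g v ERed) \<le> card (edges_mk g ERed)"
      using fin by (intro card_mono) (simp_all add: edges_mk_def)
    then show ?thesis using assms(3) by linarith
  qed
  moreover have "card (out_mk g v EDashed) \<le> 1" for v
  proof -
    have "out_mk g v EDashed \<subseteq> {d}" using assms(1) unfolding counter_graph_def out_mk_def by auto
    then show ?thesis using card_mono[of "{d}"] by fastforce
  qed
  ultimately show ?thesis unfolding few_candidates_def by blast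
qed

lemma counter_graph_search_cost:
  assumes "counter_graph cn d g" "card (rt g) \<le> 1" "card (edges_mk g ERed) \<le> 1" "r \<noteq> Count"
  shows "finite (V g) \<and> finite (E g) \<and> cost_le 6 (search r g)"
  using assms few_candidates_if_counter_graph[OF assms(1-3)] search_cost_le[of g r]
  unfolding counter_graph_def by blast

lemma n_blue_le: "counter_graph cn d g \<Longrightarrow> n_blue g \<le> card (V g)"
  using card_nodes_mk_le counter_graph_finite by blast

lemma n_unmarked_le: "counter_graph cn d g \<Longrightarrow> n_unmarked g \<le> card (E g)"
  using card_edges_mk_le counter_graph_finite by blast

section \<open>Budget invariants\<close>

text \<open>Every rule call costs at most 7. A blue node still to be relaxed is charged
  28 = 4 * 7 for Root1, NoDeg, the last (failing) UnmarkedEdge and Unroot1; an unmarked edge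
  is charged 28 for UnmarkedEdge, the call of Unvisited and Reduce, and Finish.\<close>
definition round_cost :: "hgraph \<Rightarrow> nat" where "round_cost g = 21 + 147 * card (E g)"
definition clean_cost :: "hgraph \<Rightarrow> nat" where "clean_cost g = 119 * card (E g) + 14"
definition final_cost :: "hgraph \<Rightarrow> nat" where "final_cost g = 35 * card (V g) + 28 * card (E g) + 35"

lemma clean_cost_ge: "counter_graph cn d g \<Longrightarrow> clean_cost g \<ge> 133"
  using counter_graph_finite[of cn d g] unfolding clean_cost_def by simp

lemma final_cost_ge: "final_cost g \<ge> 35"
  unfolding final_cost_def by simp

definition counter_value :: "nat \<Rightarrow> nat \<Rightarrow> hgraph \<Rightarrow> bool" where
  "counter_value cn j g \<longleftrightarrow> nlab g cn = [AInt (int j)]"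

text \<open>The first Relax loop unmarks all isolated nodes, so in every later round the grey
  nodes are non-isolated and hence at most 2 * card (E g) many: a round costs O(m), not
  O(n + m).\<close>
definition grey_non_isolated :: "hgraph \<Rightarrow> bool" where
  "grey_non_isolated g \<longleftrightarrow> (\<forall>v\<in>nodes_mk g NGrey. non_isolated g v)"

lemmas count_defs = grey_non_isolated_def counter_value_def round_cost_def final_cost_def
  clean_cost_def nodes_mk_def edges_mk_def non_isolated_def

definition count_inv :: "nat \<Rightarrow> nat \<Rightarrow> hgraph \<Rightarrow> nat \<Rightarrow> bool" where
  "count_inv cn d g b \<longleftrightarrow> counter_graph cn d g \<and> edges_mk g ERed = {} \<and> rt g = {} \<and>
     (\<exists>i. counter_value cn i g \<and>
        7 * n_grey g + 7 + (i + n_grey g) * round_cost g + 28 * card (V g) + final_cost g \<le> b)"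

definition round_inv :: "nat \<Rightarrow> nat \<Rightarrow> nat \<Rightarrow> hgraph \<Rightarrow> nat \<Rightarrow> bool" where
  "round_inv cn d i g b \<longleftrightarrow> counter_graph cn d g \<and> edges_mk g ERed = {} \<and> rt g = {} \<and>
     grey_non_isolated g \<and> counter_value cn i g \<and>
     i * round_cost g + 28 * n_blue g + final_cost g \<le> b"

definition relax_inv :: "nat \<Rightarrow> nat \<Rightarrow> nat \<Rightarrow> hgraph \<Rightarrow> nat \<Rightarrow> bool" where
  "relax_inv cn d j g b \<longleftrightarrow> counter_graph cn d g \<and> edges_mk g ERed = {} \<and> rt g = {} \<and>
     grey_non_isolated g \<and> counter_value cn j g \<and>
     28 * n_blue g + 28 * n_unmarked g + clean_cost g + j * round_cost g + final_cost g \<le> b"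

definition relax_root_inv :: "nat \<Rightarrow> nat \<Rightarrow> nat \<Rightarrow> nat \<Rightarrow> hgraph \<Rightarrow> nat \<Rightarrow> bool" where
  "relax_root_inv cn d j v g b \<longleftrightarrow> counter_graph cn d g \<and> edges_mk g ERed = {} \<and>
     rt g = {v} \<and> v \<in> V g \<and> v \<noteq> cn \<and> nmk g v = NBlue \<and>
     grey_non_isolated g \<and> counter_value cn j g \<and>
     28 * n_blue g + 28 * n_unmarked g + clean_cost g + j * round_cost g + final_cost g \<le> b + 7"

definition relax_edges_inv :: "nat \<Rightarrow> nat \<Rightarrow> nat \<Rightarrow> nat \<Rightarrow> nat \<Rightarrow> hgraph \<Rightarrow> nat \<Rightarrow> bool" where
  "relax_edges_inv cn d j k v g b \<longleftrightarrow> counter_graph cn d g \<and> edges_mk g ERed = {} \<and>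
     rt g = {v} \<and> v \<in> V g \<and> v \<noteq> cn \<and> nmk g v = NBlue \<and> non_isolated g v \<and>
     grey_non_isolated g \<and> counter_value cn j g \<and>
     28 * n_blue g + 28 * n_unmarked g + clean_cost g + j * round_cost g + final_cost g \<le> b + k"

definition relax_red_inv ::
    "nat \<Rightarrow> nat \<Rightarrow> nat \<Rightarrow> nat \<Rightarrow> nat \<Rightarrow> nat \<Rightarrow> hgraph \<Rightarrow> nat \<Rightarrow> bool" where
  "relax_red_inv cn d j k v e g b \<longleftrightarrow> counter_graph cn d g \<and>
     edges_mk g ERed = {e} \<and> e \<in> E g \<and> src g e = v \<and> tgt g e \<noteq> v \<and> e \<noteq> d \<and>
     rt g = {v} \<and> v \<in> V g \<and> v \<noteq> cn \<and> nmk g v = NBlue \<and> non_isolated g v \<and>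
     grey_non_isolated g \<and> counter_value cn j g \<and>
     28 * n_blue g + 28 * n_unmarked g + clean_cost g + j * round_cost g + final_cost g + k \<le> b + 14"

definition clean_inv :: "nat \<Rightarrow> nat \<Rightarrow> nat \<Rightarrow> hgraph \<Rightarrow> nat \<Rightarrow> bool" where
  "clean_inv cn d j g b \<longleftrightarrow> counter_graph cn d g \<and> edges_mk g ERed = {} \<and> rt g = {} \<and>
     grey_non_isolated g \<and> counter_value cn j g \<and>
     28 * n_grey g + 7 * n_blue_edges g + 7 + 28 * (n_blue g + n_grey g) + j * round_cost g +
       final_cost g \<le> b"

definition clean_root_inv :: "nat \<Rightarrow> nat \<Rightarrow> nat \<Rightarrow> nat \<Rightarrow> nat \<Rightarrow> hgraph \<Rightarrow> nat \<Rightarrow> bool" where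
  "clean_root_inv cn d j k v g b \<longleftrightarrow> counter_graph cn d g \<and> edges_mk g ERed = {} \<and>
     rt g = {v} \<and> v \<in> V g \<and> v \<noteq> cn \<and> nmk g v = NBlue \<and>
     grey_non_isolated g \<and> counter_value cn j g \<and>
     28 * n_grey g + 7 * n_blue_edges g + k + 28 * (n_blue g + n_grey g) + j * round_cost g +
       final_cost g \<le> b"

definition final_inv :: "nat \<Rightarrow> nat \<Rightarrow> hgraph \<Rightarrow> nat \<Rightarrow> bool" where
  "final_inv cn d g b \<longleftrightarrow> counter_graph cn d g \<and> edges_mk g ERed = {} \<and> rt g = {} \<and>
     28 * n_blue g + 28 * n_unmarked g + 28 + 7 * card (V g) \<le> b"

definition final_root_inv :: "nat \<Rightarrow> nat \<Rightarrow> nat \<Rightarrow> nat \<Rightarrow> hgraph \<Rightarrow> nat \<Rightarrow> bool" where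
  "final_root_inv cn d k v g b \<longleftrightarrow> counter_graph cn d g \<and> edges_mk g ERed = {} \<and>
     rt g = {v} \<and> v \<in> V g \<and> v \<noteq> cn \<and> nmk g v = NBlue \<and>
     28 * n_blue g + 28 * n_unmarked g + 28 + 7 * card (V g) \<le> b + k"

definition final_red_inv :: "nat \<Rightarrow> nat \<Rightarrow> nat \<Rightarrow> nat \<Rightarrow> nat \<Rightarrow> hgraph \<Rightarrow> nat \<Rightarrow> bool" where
  "final_red_inv cn d k v e g b \<longleftrightarrow> counter_graph cn d g \<and>
     edges_mk g ERed = {e} \<and> e \<in> E g \<and> src g e = v \<and> tgt g e \<noteq> v \<and> e \<noteq> d \<and>
     rt g = {v} \<and> v \<in> V g \<and> v \<noteq> cn \<and> nmk g v = NBlue \<and>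
     28 * n_blue g + 28 * n_unmarked g + 28 + 7 * card (V g) + k \<le> b + 7"

definition final_tail_inv :: "nat \<Rightarrow> nat \<Rightarrow> nat \<Rightarrow> hgraph \<Rightarrow> nat \<Rightarrow> bool" where
  "final_tail_inv cn d k g b \<longleftrightarrow> counter_graph cn d g \<and> edges_mk g ERed = {} \<and> rt g = {} \<and>
     k + 7 * card (V g) \<le> b"

definition restore_inv :: "hgraph \<Rightarrow> nat \<Rightarrow> bool" where
  "restore_inv g b \<longleftrightarrow> finite (V g) \<and> finite (E g) \<and> 7 * card (nodes_mk g NUnm) + 7 \<le> b"

lemma count_Count:
  "hoare (count_inv cn d) (R Count) (count_inv cn d) (\<lambda>g b. \<exists>i. round_inv cn d i g b)"
proof (rule hoare_rule)
  fix g b assume inv: "count_inv cn d g b"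
  then have cg: "counter_graph cn d g" by (simp add: count_inv_def)
  have s: "few_candidates g"
    using few_candidates_if_counter_graph[OF cg] inv by (simp add: count_inv_def)
  have "is_int_label (nlab g cn)"
    using inv by (auto simp: count_inv_def counter_value_def is_int_label_def)
  then have "cost_le 6 (search Count g)"
    using search_Count_cost_le[OF s counter_graph_green[OF cg]] by blast
  then show "finite (V g) \<and> finite (E g) \<and> cost_le 6 (search Count g) \<and> 7 \<le> b"
    using inv counter_graph_finite[OF cg] final_cost_ge[of g] by (auto simp: count_inv_def)
next
  fix g b m c g' b'
  assume inv: "count_inv cn d g b" and match: "(Some m, c) \<in> search Count g"
    and step: "g' \<in> app Count g m" and spent: "b \<le> b' + 7"
  have cg: "counter_graph cn d g" using inv by (simp add: count_inv_def)
  from search_Count_SomeD[OF match] counter_graph_green[OF cg]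
    obtain v where v: "v \<in> nodes_mk g NGrey" "m = [v, cn]" by auto
  obtain i where i: "counter_value cn i g"
      "7 * n_grey g + 7 + (i + n_grey g) * round_cost g + 28 * card (V g) + final_cost g \<le> b"
    using inv by (auto simp: count_inv_def)
  have vcn: "v \<noteq> cn" "v \<in> V g" using v cg unfolding counter_graph_def nodes_mk_def by auto
  have g': "g' = g\<lparr>nlab := (nlab g)(v := nlab g v @ [AStr ''f''], cn := [AInt (int i + 1)]),
      nmk := (nmk g)(v := NBlue)\<rparr>"
    using step v i(1) by (auto simp: counter_value_def)
  have "counter_graph cn d g'"
    unfolding g' by (rule counter_graph_update[OF cg])
      (use v vcn cg in \<open>auto simp: nodes_mk_def counter_graph_def\<close>)
  moreover have "n_grey g' = n_grey g - 1 \<and> n_grey g \<ge> 1"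
  proof -
    have "nodes_mk g' NGrey = nodes_mk g NGrey - {v}" using v by (auto simp: g' nodes_mk_def)
    then show ?thesis using v card_remove finite_nodes_mk counter_graph_finite[OF cg] by metis
  qed
  moreover have "edges_mk g' ERed = {}" using inv unfolding g' count_inv_def edges_mk_def by auto
  moreover have "(i + 1 + (n_grey g - 1)) = i + n_grey g" using calculation(2) by simp
  moreover have "rt g = {}" using inv by (simp add: count_inv_def)
  ultimately show "count_inv cn d g' b'" using spent i vcn unfolding count_inv_def
    by (intro conjI exI[of _ "i + 1"])
      (auto simp: counter_value_def round_cost_def final_cost_def g')
next
  fix g b c b'
  assume inv: "count_inv cn d g b" and no_match: "(None, c) \<in> search Count g"
    and spent: "b \<le> b' + 7"
  have cg: "counter_graph cn d g" using inv by (simp add: count_inv_def)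
  obtain i where i: "counter_value cn i g"
      "7 * n_grey g + 7 + (i + n_grey g) * round_cost g + 28 * card (V g) + final_cost g \<le> b"
    using inv by (auto simp: count_inv_def)
  have "is_int_label (nlab g cn)" using i(1) by (auto simp: counter_value_def is_int_label_def)
  then have "nodes_mk g NGrey = {}"
    using search_Count_NoneD[OF no_match] counter_graph_green[OF cg] by blast
  then show "\<exists>i. round_inv cn d i g b'"
    using inv spent i n_blue_le[OF cg] unfolding round_inv_def count_inv_def
    by (intro exI[of _ i]) (simp add: grey_non_isolated_def)
qed

lemma count_loop:
  "hoare (count_inv cn d) (Loop (R Count)) (\<lambda>g b. \<exists>i. round_inv cn d i g b) (\<lambda>_ _. False)"
  by (rule hoare_loop[OF _ count_Count]) simp

lemma relax_Root1:
  "hoare (relax_inv cn d j) (R Root1) (\<lambda>g b. \<exists>v. relax_root_inv cn d j v g b) (clean_inv cn d j)"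
proof (rule hoare_rule)
  fix g b assume inv: "relax_inv cn d j g b"
  then show "finite (V g) \<and> finite (E g) \<and> cost_le 6 (search Root1 g) \<and> 7 \<le> b"
    using counter_graph_search_cost[of cn d g Root1] by (auto simp: relax_inv_def clean_cost_def)
next
  fix g b m c g' b'
  assume inv: "relax_inv cn d j g b" and match: "(Some m, c) \<in> search Root1 g"
    and step: "g' \<in> app Root1 g m" and spent: "b \<le> b' + 7"
  from search_Root1_SomeD[OF match] obtain v where v: "v \<in> nodes_mk g NBlue" "m = [v]" by blast
  have cg: "counter_graph cn d g" using inv by (simp add: relax_inv_def)
  have vcn: "v \<noteq> cn" using v cg unfolding counter_graph_def nodes_mk_def by auto
  have g': "g' = g\<lparr>rt := {v}\<rparr>" using inv step v by (simp add: relax_inv_def)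
  have "counter_graph cn d g'"
    unfolding g' by (rule counter_graph_update[OF cg])
      (use v vcn cg in \<open>auto simp: nodes_mk_def counter_graph_def\<close>)
  then show "\<exists>v. relax_root_inv cn d j v g' b'"
    using inv spent v vcn unfolding relax_root_inv_def relax_inv_def g'
    by (intro exI[of _ v]) (auto simp: count_defs)
next
  fix g b c b'
  assume inv: "relax_inv cn d j g b" and no_match: "(None, c) \<in> search Root1 g"
    and spent: "b \<le> b' + 7"
  have "nodes_mk g NBlue = {}" using search_Root1_NoneD[OF no_match] .
  have cg: "counter_graph cn d g" using inv by (simp add: relax_inv_def)
  have "n_grey g \<le> 2 * card (E g)"
  proof -
    have "nodes_mk g NGrey \<subseteq> {v. non_isolated g v}"
      using inv by (auto simp: relax_inv_def grey_non_isolated_def)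
    then have "n_grey g \<le> card {v. non_isolated g v}" 
      by (intro card_mono) (use counter_graph_finite[OF cg] in \<open>auto simp: non_isolated_def\<close>)
    then show ?thesis using card_non_isolated_le[of g] counter_graph_finite[OF cg] by simp
  qed
  moreover have "n_blue_edges g \<le> card (E g)"
    using card_edges_mk_le counter_graph_finite[OF cg] by blast
  ultimately show "clean_inv cn d j g b'" using inv spent \<open>nodes_mk g NBlue = {}\<close>
    unfolding clean_inv_def relax_inv_def by (simp add: clean_cost_def)
qed

lemma relax_NoDeg:
  "hoare (relax_root_inv cn d j v) (R NoDeg) (relax_inv cn d j) (relax_edges_inv cn d j 14 v)"
proof (rule hoare_rule)
  fix g b assume inv: "relax_root_inv cn d j v g b"
  then have cg: "counter_graph cn d g" by (simp add: relax_root_inv_def)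
  then show "finite (V g) \<and> finite (E g) \<and> cost_le 6 (search NoDeg g) \<and> 7 \<le> b"
    using inv counter_graph_search_cost[of cn d g NoDeg] clean_cost_ge[OF cg]
    by (auto simp: relax_root_inv_def)
next
  fix g b m c g' b'
  assume inv: "relax_root_inv cn d j v g b" and match: "(Some m, c) \<in> search NoDeg g"
    and step: "g' \<in> app NoDeg g m" and spent: "b \<le> b' + 7"
  have cg: "counter_graph cn d g" using inv by (simp add: relax_root_inv_def)
  have rv: "roots g = {v}" using inv roots_eq_singleton by (auto simp: relax_root_inv_def)
  from search_NoDeg_SomeD[OF match] rv have m: "m = [v]" by auto
  have g': "g' = g\<lparr>nmk := (nmk g)(v := NUnm), rt := {}\<rparr>"
    using inv step m by (simp add: relax_root_inv_def)
  have "counter_graph cn d g'"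
    unfolding g' by (rule counter_graph_update[OF cg])
      (use inv cg in \<open>auto simp: relax_root_inv_def counter_graph_def\<close>)
  moreover have "n_blue g' = n_blue g - 1 \<and> n_blue g \<ge> 1"
  proof -
    have "nodes_mk g' NBlue = nodes_mk g NBlue - {v}" "v \<in> nodes_mk g NBlue"
      using inv by (auto simp: g' nodes_mk_def relax_root_inv_def)
    then show ?thesis using card_remove finite_nodes_mk counter_graph_finite[OF cg] by metis
  qed
  ultimately show "relax_inv cn d j g' b'"
    using inv spent unfolding relax_inv_def relax_root_inv_def
    by (auto simp: count_defs g' Collect_fun_upd_eq)
next
  fix g b c b'
  assume inv: "relax_root_inv cn d j v g b" and no_match: "(None, c) \<in> search NoDeg g"
    and spent: "b \<le> b' + 7"
  have rv: "roots g = {v}" using inv roots_eq_singleton by (auto simp: relax_root_inv_def)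
  have "non_isolated g v"
    using search_NoDeg_NoneD[OF no_match] inv rv
    unfolding non_isolated_def relax_root_inv_def by auto
  then show "relax_edges_inv cn d j 14 v g b'"
    using inv spent unfolding relax_edges_inv_def relax_root_inv_def by auto
qed

lemma relax_UnmarkedEdge:
  "hoare (relax_edges_inv cn d j 14 v) (R UnmarkedEdge)
     (\<lambda>g b. \<exists>e. relax_red_inv cn d j 21 v e g b) (relax_edges_inv cn d j 21 v)"
proof (rule hoare_rule)
  fix g b assume inv: "relax_edges_inv cn d j 14 v g b"
  then have cg: "counter_graph cn d g" by (simp add: relax_edges_inv_def)
  then show "finite (V g) \<and> finite (E g) \<and> cost_le 6 (search UnmarkedEdge g) \<and> 7 \<le> b"
    using inv counter_graph_search_cost[of cn d g UnmarkedEdge] clean_cost_ge[OF cg]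
    by (auto simp: relax_edges_inv_def)
next
  fix g b m c g' b'
  assume inv: "relax_edges_inv cn d j 14 v g b" and match: "(Some m, c) \<in> search UnmarkedEdge g"
    and step: "g' \<in> app UnmarkedEdge g m" and spent: "b \<le> b' + 7"
  have cg: "counter_graph cn d g" using inv by (simp add: relax_edges_inv_def)
  have rv: "roots g = {v}" using inv roots_eq_singleton by (auto simp: relax_edges_inv_def)
  from search_UnmarkedEdge_SomeD[OF match] rv
    obtain e where e: "e \<in> out_mk g v EUnm" "m = [v, tgt g e, e]" by auto
  have ed: "e \<noteq> d" using e cg unfolding out_mk_def counter_graph_def by auto
  have g': "g' = g\<lparr>emk := (emk g)(e := ERed)\<rparr>" using step e by simp
  have "counter_graph cn d g'"
    unfolding g' by (rule counter_graph_update[OF cg]) (use ed cg in \<open>auto simp: counter_graph_def\<close>)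
  moreover have "n_unmarked g' = n_unmarked g - 1" "n_unmarked g \<ge> 1"
  proof -
    have ee: "edges_mk g' EUnm = edges_mk g EUnm - {e}" "e \<in> edges_mk g EUnm"
      using e by (auto simp: g' edges_mk_def out_mk_def)
    have "finite (edges_mk g EUnm)" using counter_graph_finite[OF cg] by (simp add: edges_mk_def)
    then show "n_unmarked g' = n_unmarked g - 1" "n_unmarked g \<ge> 1" unfolding ee(1)
      using ee(2) card_gt_0_iff[of "edges_mk g EUnm"] by auto
  qed
  moreover have "edges_mk g' ERed = {e}"
    using inv e unfolding g' relax_edges_inv_def edges_mk_def out_mk_def by auto
  ultimately show "\<exists>e. relax_red_inv cn d j 21 v e g' b'"
    using inv spent e ed unfolding relax_red_inv_def relax_edges_inv_def
    by (intro exI[of _ e]) (auto simp: count_defs g' out_mk_def)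
next
  fix g b c b'
  assume "relax_edges_inv cn d j 14 v g b" "(None, c) \<in> search UnmarkedEdge g"
    "b \<le> b' + 7"
  then show "relax_edges_inv cn d j 21 v g b'" unfolding relax_edges_inv_def by auto
qed

lemma relax_Unvisited_Reduce:
  "hoare (relax_red_inv cn d j 21 v e) (Call [Unvisited, Reduce])
     (relax_red_inv cn d j 7 v e) (relax_red_inv cn d j 7 v e)"
proof (rule hoare_rule_pair)
  fix g b assume inv: "relax_red_inv cn d j 21 v e g b"
  then have cg: "counter_graph cn d g" by (simp add: relax_red_inv_def)
  then show "finite (V g) \<and> finite (E g) \<and>
      cost_le 6 (search Unvisited g) \<and> cost_le 6 (search Reduce g) \<and> 14 \<le> b"
    using inv counter_graph_search_cost[of cn d g Unvisited]
      counter_graph_search_cost[of cn d g Reduce] clean_cost_ge[OF cg]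
    by (auto simp: relax_red_inv_def)
next
  fix g b m c g' b' r
  assume inv: "relax_red_inv cn d j 21 v e g b" and rule: "r \<in> {Unvisited, Reduce}"
    and match: "(Some m, c) \<in> search r g" and step: "g' \<in> app r g m" and spent: "b \<le> b' + 14"
  have cg: "counter_graph cn d g" using inv by (simp add: relax_red_inv_def)
  have rv: "roots g = {v}" using inv roots_eq_singleton by (auto simp: relax_red_inv_def)
  have "\<exists>v'\<in>roots g. \<exists>e'\<in>out_mk g v' ERed. m = [v', tgt g e', e']"
    using rule match search_Unvisited_SomeD search_Reduce_SomeD by blast
  then have "\<exists>e'\<in>out_mk g v ERed. m = [v, tgt g e', e']" using rv by auto
  then obtain e' where e': "e' \<in> out_mk g v ERed" "m = [v, tgt g e', e']" by blast
  have "e' = e" using e' inv unfolding relax_red_inv_def out_mk_def edges_mk_def by auto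
  then have m1: "m ! 1 = tgt g e" using e' by simp
  have tcn: "tgt g e \<noteq> cn" using inv cg unfolding relax_red_inv_def counter_graph_def by auto
  obtain l where g': "g' = g\<lparr>nlab := (nlab g)(tgt g e := l)\<rparr>"
    using app_relabel[OF step rule] m1 by auto
  show "relax_red_inv cn d j 7 v e g' b'" using inv spent tcn unfolding relax_red_inv_def
    by (auto simp: g' counter_graph_def count_defs)
next
  fix g b b' assume "relax_red_inv cn d j 21 v e g b" "b \<le> b' + 14"
  then show "relax_red_inv cn d j 7 v e g b'" unfolding relax_red_inv_def by auto
qed

lemma relax_Finish:
  "hoare (relax_red_inv cn d j 7 v e) (R Finish) (relax_edges_inv cn d j 14 v) (\<lambda>_ _. False)"
proof (rule hoare_rule)
  fix g b assume inv: "relax_red_inv cn d j 7 v e g b"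
  then have cg: "counter_graph cn d g" by (simp add: relax_red_inv_def)
  then show "finite (V g) \<and> finite (E g) \<and> cost_le 6 (search Finish g) \<and> 7 \<le> b"
    using inv counter_graph_search_cost[of cn d g Finish] clean_cost_ge[OF cg]
    by (auto simp: relax_red_inv_def)
next
  fix g b m c g' b'
  assume inv: "relax_red_inv cn d j 7 v e g b" and match: "(Some m, c) \<in> search Finish g"
    and step: "g' \<in> app Finish g m" and spent: "b \<le> b' + 7"
  have cg: "counter_graph cn d g" using inv by (simp add: relax_red_inv_def)
  have rv: "roots g = {v}" using inv roots_eq_singleton by (auto simp: relax_red_inv_def)
  from search_Finish_SomeD[OF match] rv
    obtain e' where e': "e' \<in> out_mk g v ERed" "m = [v, tgt g e', e']" by auto
  have "e' = e" using e' inv unfolding relax_red_inv_def out_mk_def edges_mk_def by auto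
  then have g': "g' = g\<lparr>emk := (emk g)(e := EBlue)\<rparr>" using step e' by simp
  have ed: "e \<noteq> d" using inv by (simp add: relax_red_inv_def)
  have "counter_graph cn d g'"
    unfolding g' by (rule counter_graph_update[OF cg]) (use ed cg in \<open>auto simp: counter_graph_def\<close>)
  moreover have "n_unmarked g' = n_unmarked g"
  proof -
    have "emk g e = ERed"
      using inv unfolding relax_red_inv_def edges_mk_def by blast
    then have "edges_mk g' EUnm = edges_mk g EUnm" by (auto simp: g' edges_mk_def)
    then show ?thesis by simp
  qed
  moreover have "edges_mk g' ERed = {}"
    using inv unfolding g' relax_red_inv_def edges_mk_def by auto
  ultimately show "relax_edges_inv cn d j 14 v g' b'"
    using inv spent unfolding relax_red_inv_def relax_edges_inv_def
    by (auto simp: count_defs g')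
next
  fix g b c b'
  assume inv: "relax_red_inv cn d j 7 v e g b" and no_match: "(None, c) \<in> search Finish g"
    and "b \<le> b' + 7"
  have rv: "roots g = {v}" using inv roots_eq_singleton by (auto simp: relax_red_inv_def)
  have "out_mk g v ERed = {}"
    using search_Finish_NoneD[OF no_match] inv rv by (auto simp: relax_red_inv_def)
  moreover have "e \<in> out_mk g v ERed"
    using inv unfolding relax_red_inv_def out_mk_def edges_mk_def by auto
  ultimately show False by simp
qed

lemma relax_Unroot1:
  "hoare (relax_edges_inv cn d j 21 v) (R Unroot1) (relax_inv cn d j) (\<lambda>_ _. False)"
proof (rule hoare_rule)
  fix g b assume inv: "relax_edges_inv cn d j 21 v g b"
  then have cg: "counter_graph cn d g" by (simp add: relax_edges_inv_def)
  then show "finite (V g) \<and> finite (E g) \<and> cost_le 6 (search Unroot1 g) \<and> 7 \<le> b"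
    using inv counter_graph_search_cost[of cn d g Unroot1] clean_cost_ge[OF cg]
    by (auto simp: relax_edges_inv_def)
next
  fix g b m c g' b'
  assume inv: "relax_edges_inv cn d j 21 v g b" and match: "(Some m, c) \<in> search Unroot1 g"
    and step: "g' \<in> app Unroot1 g m" and spent: "b \<le> b' + 7"
  have cg: "counter_graph cn d g" using inv by (simp add: relax_edges_inv_def)
  have rv: "roots g = {v}" using inv roots_eq_singleton by (auto simp: relax_edges_inv_def)
  from search_Unroot1_SomeD[OF match] rv have m: "m = [v]" by auto
  have g': "g' = g\<lparr>nmk := (nmk g)(v := NGrey), rt := {}\<rparr>"
    using inv step m by (simp add: relax_edges_inv_def)
  have "counter_graph cn d g'"
    unfolding g' by (rule counter_graph_update[OF cg])
      (use inv cg in \<open>auto simp: relax_edges_inv_def counter_graph_def\<close>)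
  moreover have "n_blue g' = n_blue g - 1 \<and> n_blue g \<ge> 1"
  proof -
    have "nodes_mk g' NBlue = nodes_mk g NBlue - {v}" "v \<in> nodes_mk g NBlue"
      using inv by (auto simp: g' nodes_mk_def relax_edges_inv_def)
    then show ?thesis using card_remove finite_nodes_mk counter_graph_finite[OF cg] by metis
  qed
  moreover have "nodes_mk g' NGrey = insert v (nodes_mk g NGrey)"
    using inv by (auto simp: g' nodes_mk_def relax_edges_inv_def)
  ultimately show "relax_inv cn d j g' b'"
    using inv spent unfolding relax_inv_def relax_edges_inv_def
    by (auto simp: count_defs g' Collect_fun_upd_eq)
next
  fix g b c b'
  assume inv: "relax_edges_inv cn d j 21 v g b" and no_match: "(None, c) \<in> search Unroot1 g"
    and "b \<le> b' + 7"
  have rv: "roots g = {v}" using inv roots_eq_singleton by (auto simp: relax_edges_inv_def)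
  show False using search_Unroot1_NoneD[OF no_match] inv rv by (auto simp: relax_edges_inv_def)
qed

lemma relax_loop: "hoare (relax_inv cn d j) (Loop Relax) (clean_inv cn d j) (\<lambda>_ _. False)"
proof -
  have red_edge: "hoare (relax_red_inv cn d j 21 v e)
      (Seq (Try (Call [Unvisited, Reduce]) Skip Skip) (R Finish))
      (relax_edges_inv cn d j 14 v) (\<lambda>_ _. False)" for v e
    by (rule hoare_seq[OF hoare_try[OF relax_Unvisited_Reduce hoare_skip hoare_skip] relax_Finish])
      simp_all
  have edge: "hoare (relax_edges_inv cn d j 14 v)
      (Seq (R UnmarkedEdge) (Seq (Try (Call [Unvisited, Reduce]) Skip Skip) (R Finish)))
      (relax_edges_inv cn d j 14 v) (relax_edges_inv cn d j 21 v)" for v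
    by (rule hoare_seq[OF relax_UnmarkedEdge hoare_exists[OF red_edge[of v]]]) simp_all
  have edges: "hoare (relax_edges_inv cn d j 14 v)
      (Seq (Loop (Seq (R UnmarkedEdge) (Seq (Try (Call [Unvisited, Reduce]) Skip Skip) (R Finish))))
        (R Unroot1))
      (relax_inv cn d j) (\<lambda>_ _. False)" for v
    by (rule hoare_seq[OF hoare_loop[OF _ edge] relax_Unroot1]) simp_all
  have body: "hoare (relax_inv cn d j) Relax (relax_inv cn d j) (clean_inv cn d j)"
    unfolding Relax_def
    by (rule hoare_seq[OF relax_Root1 hoare_exists[OF hoare_try[OF relax_NoDeg hoare_skip edges]]])
      simp_all
  show ?thesis by (rule hoare_loop[OF _ body]) (simp add: Relax_def)
qed

lemma clean_Root2:
  "hoare (clean_inv cn d j) (R Root2) (\<lambda>g b. \<exists>v. clean_root_inv cn d j 28 v g b) (round_inv cn d j)"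
proof (rule hoare_rule)
  fix g b assume inv: "clean_inv cn d j g b"
  then have cg: "counter_graph cn d g" by (simp add: clean_inv_def)
  then show "finite (V g) \<and> finite (E g) \<and> cost_le 6 (search Root2 g) \<and> 7 \<le> b"
    using inv counter_graph_search_cost[of cn d g Root2] final_cost_ge[of g]
    by (auto simp: clean_inv_def)
next
  fix g b m c g' b'
  assume inv: "clean_inv cn d j g b" and match: "(Some m, c) \<in> search Root2 g"
    and step: "g' \<in> app Root2 g m" and spent: "b \<le> b' + 7"
  from search_Root2_SomeD[OF match] obtain v where v: "v \<in> nodes_mk g NGrey" "m = [v]" by blast
  have cg: "counter_graph cn d g" using inv by (simp add: clean_inv_def)
  have vcn: "v \<noteq> cn" "v \<in> V g" using v cg unfolding counter_graph_def nodes_mk_def by auto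
  have g': "g' = g\<lparr>nmk := (nmk g)(v := NBlue), rt := {v}\<rparr>"
    using inv step v by (simp add: clean_inv_def)
  have "counter_graph cn d g'"
    unfolding g' by (rule counter_graph_update[OF cg])
      (use v vcn cg in \<open>auto simp: nodes_mk_def counter_graph_def\<close>)
  moreover have "n_grey g' = n_grey g - 1 \<and> n_grey g \<ge> 1"
  proof -
    have "nodes_mk g' NGrey = nodes_mk g NGrey - {v}" using v by (auto simp: g' nodes_mk_def)
    then show ?thesis using v card_remove finite_nodes_mk counter_graph_finite[OF cg] by metis
  qed
  moreover have "n_blue g' = n_blue g + 1"
  proof -
    have "nodes_mk g' NBlue = insert v (nodes_mk g NBlue)" "v \<notin> nodes_mk g NBlue"
      using v by (auto simp: g' nodes_mk_def)
    then show ?thesis using finite_nodes_mk[of g NBlue] counter_graph_finite[OF cg] by simp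
  qed
  moreover have "nodes_mk g' NGrey \<subseteq> nodes_mk g NGrey" by (auto simp: g' nodes_mk_def)
  ultimately show "\<exists>v. clean_root_inv cn d j 28 v g' b'"
    using inv spent v vcn unfolding clean_root_inv_def clean_inv_def
    by (intro exI[of _ v]) (auto simp: count_defs g')
next
  fix g b c b'
  assume inv: "clean_inv cn d j g b" and no_match: "(None, c) \<in> search Root2 g"
    and spent: "b \<le> b' + 7"
  have "nodes_mk g NGrey = {}" using search_Root2_NoneD[OF no_match] .
  then show "round_inv cn d j g b'"
    using inv spent unfolding round_inv_def clean_inv_def by (simp add: grey_non_isolated_def)
qed

lemma clean_UnmarkEdge:
  "hoare (clean_root_inv cn d j 28 v) (R UnmarkEdge)
     (clean_root_inv cn d j 28 v) (clean_root_inv cn d j 21 v)"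
proof (rule hoare_rule)
  fix g b assume inv: "clean_root_inv cn d j 28 v g b"
  then have cg: "counter_graph cn d g" by (simp add: clean_root_inv_def)
  then show "finite (V g) \<and> finite (E g) \<and> cost_le 6 (search UnmarkEdge g) \<and> 7 \<le> b"
    using inv counter_graph_search_cost[of cn d g UnmarkEdge] final_cost_ge[of g]
    by (auto simp: clean_root_inv_def)
next
  fix g b m c g' b'
  assume inv: "clean_root_inv cn d j 28 v g b" and match: "(Some m, c) \<in> search UnmarkEdge g"
    and step: "g' \<in> app UnmarkEdge g m" and spent: "b \<le> b' + 7"
  have cg: "counter_graph cn d g" using inv by (simp add: clean_root_inv_def)
  have rv: "roots g = {v}" using inv roots_eq_singleton by (auto simp: clean_root_inv_def)
  from search_UnmarkEdge_SomeD[OF match] rv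
    obtain e where e: "e \<in> out_mk g v EBlue" "m = [v, tgt g e, e]" by auto
  have ed: "e \<noteq> d" using e cg unfolding out_mk_def counter_graph_def by auto
  have g': "g' = g\<lparr>emk := (emk g)(e := EUnm)\<rparr>" using step e by simp
  have "counter_graph cn d g'"
    unfolding g' by (rule counter_graph_update[OF cg]) (use ed cg in \<open>auto simp: counter_graph_def\<close>)
  moreover have "n_blue_edges g' = n_blue_edges g - 1 \<and> n_blue_edges g \<ge> 1"
  proof -
    have "edges_mk g' EBlue = edges_mk g EBlue - {e}" "e \<in> edges_mk g EBlue"
      using e by (auto simp: g' edges_mk_def out_mk_def)
    then show ?thesis using card_remove finite_edges_mk counter_graph_finite[OF cg] by metis
  qed
  moreover have "edges_mk g' ERed = {}"
    using inv e unfolding g' clean_root_inv_def edges_mk_def out_mk_def by auto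
  ultimately show "clean_root_inv cn d j 28 v g' b'" using inv spent unfolding clean_root_inv_def
    by (auto simp: count_defs g')
next
  fix g b c b'
  assume "clean_root_inv cn d j 28 v g b" "(None, c) \<in> search UnmarkEdge g"
    "b \<le> b' + 7"
  then show "clean_root_inv cn d j 21 v g b'" unfolding clean_root_inv_def by auto
qed

lemma clean_Unroot2:
  "hoare (clean_root_inv cn d j 21 v) (R Unroot2) (clean_inv cn d j) (\<lambda>_ _. False)"
proof (rule hoare_rule)
  fix g b assume inv: "clean_root_inv cn d j 21 v g b"
  then have cg: "counter_graph cn d g" by (simp add: clean_root_inv_def)
  then show "finite (V g) \<and> finite (E g) \<and> cost_le 6 (search Unroot2 g) \<and> 7 \<le> b"
    using inv counter_graph_search_cost[of cn d g Unroot2] final_cost_ge[of g]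
    by (auto simp: clean_root_inv_def)
next
  fix g b m c g' b'
  assume inv: "clean_root_inv cn d j 21 v g b" and match: "(Some m, c) \<in> search Unroot2 g"
    and step: "g' \<in> app Unroot2 g m" and spent: "b \<le> b' + 7"
  have cg: "counter_graph cn d g" using inv by (simp add: clean_root_inv_def)
  have rv: "roots g = {v}" using inv roots_eq_singleton by (auto simp: clean_root_inv_def)
  from search_Unroot2_SomeD[OF match] rv have m: "m = [v]" by auto
  have g': "g' = g\<lparr>rt := {}\<rparr>" using inv step m by (simp add: clean_root_inv_def)
  have "counter_graph cn d g'"
    unfolding g' by (rule counter_graph_update[OF cg]) (use cg in \<open>auto simp: counter_graph_def\<close>)
  then show "clean_inv cn d j g' b'" using inv spent unfolding clean_inv_def clean_root_inv_def
    by (auto simp: count_defs g')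
next
  fix g b c b'
  assume inv: "clean_root_inv cn d j 21 v g b" and no_match: "(None, c) \<in> search Unroot2 g"
    and "b \<le> b' + 7"
  have rv: "roots g = {v}" using inv roots_eq_singleton by (auto simp: clean_root_inv_def)
  show False using search_Unroot2_NoneD[OF no_match] inv rv by (auto simp: clean_root_inv_def)
qed

lemma clean_loop: "hoare (clean_inv cn d j) (Loop Clean) (round_inv cn d j) (\<lambda>_ _. False)"
proof -
  have root: "hoare (clean_root_inv cn d j 28 v) (Seq (Loop (R UnmarkEdge)) (R Unroot2))
      (clean_inv cn d j) (\<lambda>_ _. False)" for v
    by (rule hoare_seq[OF hoare_loop[OF _ clean_UnmarkEdge] clean_Unroot2]) simp_all
  have body: "hoare (clean_inv cn d j) Clean (clean_inv cn d j) (round_inv cn d j)"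
    unfolding Clean_def by (rule hoare_seq[OF clean_Root2 hoare_exists[OF root]]) simp_all
  show ?thesis by (rule hoare_loop[OF _ body]) (simp add: Clean_def)
qed

lemma round_Decrement:
  "hoare (round_inv cn d i) (R Decrement) (\<lambda>g b. \<exists>j. relax_inv cn d j g b) (final_inv cn d)"
proof (rule hoare_rule)
  fix g b assume inv: "round_inv cn d i g b"
  then have cg: "counter_graph cn d g" by (simp add: round_inv_def)
  then show "finite (V g) \<and> finite (E g) \<and> cost_le 6 (search Decrement g) \<and> 7 \<le> b"
    using inv counter_graph_search_cost[of cn d g Decrement] final_cost_ge[of g]
    by (auto simp: round_inv_def)
next
  fix g b m c g' b'
  assume inv: "round_inv cn d i g b" and match: "(Some m, c) \<in> search Decrement g"
    and step: "g' \<in> app Decrement g m" and spent: "b \<le> b' + 7"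
  have cg: "counter_graph cn d g" using inv by (simp add: round_inv_def)
  from search_Decrement_SomeD[OF match] counter_graph_green[OF cg]
  have m: "m = [cn]" and pos: "\<exists>i'. nlab g cn = [AInt i'] \<and> i' > 0" by auto
  have label: "nlab g cn = [AInt (int i)]"
    using inv by (simp add: round_inv_def counter_value_def)
  then have i_pos: "i > 0" using pos by auto
  have g': "g' = g\<lparr>nlab := (nlab g)(cn := [AInt (int (i - 1))])\<rparr>"
    using step m label i_pos by (simp add: of_nat_diff)
  have round_split: "i * round_cost g = (i - 1) * round_cost g + round_cost g" using i_pos by (cases i) auto
  have "n_unmarked g \<le> card (E g)" using n_unmarked_le[OF cg] .
  then show "\<exists>j. relax_inv cn d j g' b'" using inv spent round_split unfolding relax_inv_def round_inv_def
    by (intro exI[of _ "i - 1"]) (auto simp: g' count_defs counter_graph_def)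
next
  fix g b c b'
  assume inv: "round_inv cn d i g b" and no_match: "(None, c) \<in> search Decrement g"
    and spent: "b \<le> b' + 7"
  have cg: "counter_graph cn d g" using inv by (simp add: round_inv_def)
  have label: "nlab g cn = [AInt (int i)]"
    using inv by (simp add: round_inv_def counter_value_def)
  have "i = 0"
    using search_Decrement_NoneD[OF no_match] counter_graph_green[OF cg] label by auto
  then show "final_inv cn d g b'"
    using inv spent n_unmarked_le[OF cg] n_blue_le[OF cg] unfolding final_inv_def round_inv_def
    by (simp add: final_cost_def)
qed

lemma main_loop:
  "hoare (\<lambda>g b. \<exists>i. round_inv cn d i g b) (Loop (Seq (R Decrement) (Seq (Loop Relax) (Loop Clean))))
     (final_inv cn d) (\<lambda>_ _. False)"
proof -
  have round: "hoare (relax_inv cn d j) (Seq (Loop Relax) (Loop Clean))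
      (round_inv cn d j) (\<lambda>_ _. False)"
    for j by (rule hoare_seq[OF relax_loop clean_loop]) simp_all
  have relax_clean: "hoare (\<lambda>g b. \<exists>j. relax_inv cn d j g b) (Seq (Loop Relax) (Loop Clean))
      (\<lambda>g b. \<exists>i. round_inv cn d i g b) (\<lambda>_ _. False)"
    by (intro hoare_exists hoare_conseq[OF round]) auto
  have body: "hoare (\<lambda>g b. \<exists>i. round_inv cn d i g b)
      (Seq (R Decrement) (Seq (Loop Relax) (Loop Clean)))
      (\<lambda>g b. \<exists>i. round_inv cn d i g b) (final_inv cn d)"
    by (intro hoare_exists hoare_seq[OF round_Decrement relax_clean]) simp_all
  show ?thesis by (rule hoare_loop[OF _ body]) simp
qed

lemma final_Root1:
  "hoare (final_inv cn d) (R Root1)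
     (\<lambda>g b. \<exists>v. final_root_inv cn d 7 v g b) (final_tail_inv cn d 21)"
proof (rule hoare_rule)
  fix g b assume inv: "final_inv cn d g b"
  then have cg: "counter_graph cn d g" by (simp add: final_inv_def)
  then show "finite (V g) \<and> finite (E g) \<and> cost_le 6 (search Root1 g) \<and> 7 \<le> b"
    using inv counter_graph_search_cost[of cn d g Root1] by (auto simp: final_inv_def)
next
  fix g b m c g' b'
  assume inv: "final_inv cn d g b" and match: "(Some m, c) \<in> search Root1 g"
    and step: "g' \<in> app Root1 g m" and spent: "b \<le> b' + 7"
  from search_Root1_SomeD[OF match] obtain v where v: "v \<in> nodes_mk g NBlue" "m = [v]" by blast
  have cg: "counter_graph cn d g" using inv by (simp add: final_inv_def)
  have vcn: "v \<noteq> cn" using v cg unfolding counter_graph_def nodes_mk_def by auto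
  have g': "g' = g\<lparr>rt := {v}\<rparr>" using inv step v by (simp add: final_inv_def)
  have "counter_graph cn d g'"
    unfolding g' by (rule counter_graph_update[OF cg])
      (use v vcn cg in \<open>auto simp: nodes_mk_def counter_graph_def\<close>)
  then show "\<exists>v. final_root_inv cn d 7 v g' b'"
    using inv spent v vcn unfolding final_root_inv_def final_inv_def g'
    by (intro exI[of _ v]) (auto simp: count_defs)
next
  fix g b c b'
  assume "final_inv cn d g b" "(None, c) \<in> search Root1 g"
    "b \<le> b' + 7"
  then show "final_tail_inv cn d 21 g b'" unfolding final_tail_inv_def final_inv_def by auto
qed

lemma final_UnmarkedEdge:
  "hoare (final_root_inv cn d 7 v) (R UnmarkedEdge)
     (\<lambda>g b. \<exists>e. final_red_inv cn d 21 v e g b) (final_root_inv cn d 14 v)"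
proof (rule hoare_rule)
  fix g b assume inv: "final_root_inv cn d 7 v g b"
  then have cg: "counter_graph cn d g" by (simp add: final_root_inv_def)
  then show "finite (V g) \<and> finite (E g) \<and> cost_le 6 (search UnmarkedEdge g) \<and> 7 \<le> b"
    using inv counter_graph_search_cost[of cn d g UnmarkedEdge] counter_graph_finite[OF cg]
    by (auto simp: final_root_inv_def)
next
  fix g b m c g' b'
  assume inv: "final_root_inv cn d 7 v g b" and match: "(Some m, c) \<in> search UnmarkedEdge g"
    and step: "g' \<in> app UnmarkedEdge g m" and spent: "b \<le> b' + 7"
  have cg: "counter_graph cn d g" using inv by (simp add: final_root_inv_def)
  have rv: "roots g = {v}" using inv roots_eq_singleton by (auto simp: final_root_inv_def)
  from search_UnmarkedEdge_SomeD[OF match] rv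
    obtain e where e: "e \<in> out_mk g v EUnm" "m = [v, tgt g e, e]" by auto
  have ed: "e \<noteq> d" using e cg unfolding out_mk_def counter_graph_def by auto
  have g': "g' = g\<lparr>emk := (emk g)(e := ERed)\<rparr>" using step e by simp
  have "counter_graph cn d g'"
    unfolding g' by (rule counter_graph_update[OF cg]) (use ed cg in \<open>auto simp: counter_graph_def\<close>)
  moreover have "n_unmarked g' = n_unmarked g - 1 \<and> n_unmarked g \<ge> 1"
  proof -
    have "edges_mk g' EUnm = edges_mk g EUnm - {e}" "e \<in> edges_mk g EUnm"
      using e by (auto simp: g' edges_mk_def out_mk_def)
    then show ?thesis using card_remove finite_edges_mk counter_graph_finite[OF cg] by metis
  qed
  moreover have "edges_mk g' ERed = {e}"
    using inv e unfolding g' final_root_inv_def edges_mk_def out_mk_def by auto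
  ultimately show "\<exists>e. final_red_inv cn d 21 v e g' b'"
    using inv spent e ed unfolding final_red_inv_def final_root_inv_def
    by (intro exI[of _ e]) (auto simp: count_defs g' out_mk_def)
next
  fix g b c b'
  assume "final_root_inv cn d 7 v g b" "(None, c) \<in> search UnmarkedEdge g"
    "b \<le> b' + 7"
  then show "final_root_inv cn d 14 v g b'" unfolding final_root_inv_def by auto
qed

lemma final_Reduce:
  "hoare (\<lambda>g b. final_red_inv cn d 21 v e g b \<and> g = g0) (R Reduce)
     (\<lambda>_ b. final_red_inv cn d 14 v e g0 b) (final_red_inv cn d 14 v e)"
proof (rule hoare_rule)
  fix g b assume inv: "final_red_inv cn d 21 v e g b \<and> g = g0"
  then have cg: "counter_graph cn d g" unfolding final_red_inv_def by blast
  then show "finite (V g) \<and> finite (E g) \<and> cost_le 6 (search Reduce g) \<and> 7 \<le> b"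
    using inv counter_graph_search_cost[of cn d g Reduce] counter_graph_finite[OF cg]
    by (auto simp: final_red_inv_def)
next
  fix g b m c g' b' assume "final_red_inv cn d 21 v e g b \<and> g = g0" "b \<le> b' + 7"
  then show "final_red_inv cn d 14 v e g0 b'" unfolding final_red_inv_def by auto
next
  fix g b c b' assume "final_red_inv cn d 21 v e g b \<and> g = g0" "b \<le> b' + 7"
  then show "final_red_inv cn d 14 v e g b'" unfolding final_red_inv_def by auto
qed

lemma final_SetFlag:
  "hoare (final_red_inv cn d 14 v e) (R SetFlag) (final_red_inv cn d 7 v e) (\<lambda>_ _. False)"
proof (rule hoare_rule)
  fix g b assume inv: "final_red_inv cn d 14 v e g b"
  then have cg: "counter_graph cn d g" by (simp add: final_red_inv_def)
  then show "finite (V g) \<and> finite (E g) \<and> cost_le 6 (search SetFlag g) \<and> 7 \<le> b"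
    using inv counter_graph_search_cost[of cn d g SetFlag] counter_graph_finite[OF cg]
    by (auto simp: final_red_inv_def)
next
  fix g b m c g' b'
  assume inv: "final_red_inv cn d 14 v e g b" and match: "(Some m, c) \<in> search SetFlag g"
    and step: "g' \<in> app SetFlag g m" and spent: "b \<le> b' + 7"
  have cg: "counter_graph cn d g" using inv by (simp add: final_red_inv_def)
  from search_SetFlag_SomeD[OF match] counter_graph_green[OF cg] have m: "m = [cn]" by auto
  have g': "g' = g\<lparr>nlab := (nlab g)(cn := [AInt (-1)])\<rparr>" using step m by simp
  show "final_red_inv cn d 7 v e g' b'" using inv spent unfolding final_red_inv_def
    by (auto simp: g' counter_graph_def count_defs)
next
  fix g b c b'
  assume inv: "final_red_inv cn d 14 v e g b" and no_match: "(None, c) \<in> search SetFlag g"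
    and "b \<le> b' + 7"
  have cg: "counter_graph cn d g" using inv by (simp add: final_red_inv_def)
  show False using search_SetFlag_NoneD[OF no_match] counter_graph_green[OF cg] by simp
qed

lemma final_if_Reduce:
  "hoare (final_red_inv cn d 21 v e) (IfC (R Reduce) (R SetFlag) Skip)
     (final_red_inv cn d 7 v e) (\<lambda>_ _. False)"
proof -
  have skip: "hoare (final_red_inv cn d 14 v e) Skip (final_red_inv cn d 7 v e) (\<lambda>_ _. False)"
    by (rule hoare_conseq[OF hoare_skip]) (auto simp: final_red_inv_def)
  show ?thesis
    by (rule hoare_conseq[OF hoare_if[OF final_Reduce final_SetFlag skip]]) auto
qed

lemma final_Finish:
  "hoare (final_red_inv cn d 7 v e) (R Finish) (final_root_inv cn d 7 v) (\<lambda>_ _. False)"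
proof (rule hoare_rule)
  fix g b assume inv: "final_red_inv cn d 7 v e g b"
  then have cg: "counter_graph cn d g" by (simp add: final_red_inv_def)
  then show "finite (V g) \<and> finite (E g) \<and> cost_le 6 (search Finish g) \<and> 7 \<le> b"
    using inv counter_graph_search_cost[of cn d g Finish] counter_graph_finite[OF cg]
    by (auto simp: final_red_inv_def)
next
  fix g b m c g' b'
  assume inv: "final_red_inv cn d 7 v e g b" and match: "(Some m, c) \<in> search Finish g"
    and step: "g' \<in> app Finish g m" and spent: "b \<le> b' + 7"
  have cg: "counter_graph cn d g" using inv by (simp add: final_red_inv_def)
  have rv: "roots g = {v}" using inv roots_eq_singleton by (auto simp: final_red_inv_def)
  from search_Finish_SomeD[OF match] rv
    obtain e' where e': "e' \<in> out_mk g v ERed" "m = [v, tgt g e', e']" by auto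
  have "e' = e" using e' inv unfolding final_red_inv_def out_mk_def edges_mk_def by auto
  then have g': "g' = g\<lparr>emk := (emk g)(e := EBlue)\<rparr>" using step e' by simp
  have ed: "e \<noteq> d" using inv by (simp add: final_red_inv_def)
  have "counter_graph cn d g'"
    unfolding g' by (rule counter_graph_update[OF cg]) (use ed cg in \<open>auto simp: counter_graph_def\<close>)
  moreover have "n_unmarked g' = n_unmarked g"
  proof -
    have "emk g e = ERed"
      using inv unfolding final_red_inv_def edges_mk_def by blast
    then have "edges_mk g' EUnm = edges_mk g EUnm" by (auto simp: g' edges_mk_def)
    then show ?thesis by simp
  qed
  moreover have "edges_mk g' ERed = {}"
    using inv unfolding g' final_red_inv_def edges_mk_def by auto
  ultimately show "final_root_inv cn d 7 v g' b'"
    using inv spent unfolding final_red_inv_def final_root_inv_def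
    by (auto simp: count_defs g')
next
  fix g b c b'
  assume inv: "final_red_inv cn d 7 v e g b" and no_match: "(None, c) \<in> search Finish g"
    and "b \<le> b' + 7"
  have rv: "roots g = {v}" using inv roots_eq_singleton by (auto simp: final_red_inv_def)
  have "out_mk g v ERed = {}"
    using search_Finish_NoneD[OF no_match] inv rv by (auto simp: final_red_inv_def)
  moreover have "e \<in> out_mk g v ERed"
    using inv unfolding final_red_inv_def out_mk_def edges_mk_def by auto
  ultimately show False by simp
qed

lemma final_Unroot1: "hoare (final_root_inv cn d 14 v) (R Unroot1) (final_inv cn d) (\<lambda>_ _. False)"
proof (rule hoare_rule)
  fix g b assume inv: "final_root_inv cn d 14 v g b"
  then have cg: "counter_graph cn d g" by (simp add: final_root_inv_def)
  then show "finite (V g) \<and> finite (E g) \<and> cost_le 6 (search Unroot1 g) \<and> 7 \<le> b"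
    using inv counter_graph_search_cost[of cn d g Unroot1] counter_graph_finite[OF cg]
    by (auto simp: final_root_inv_def)
next
  fix g b m c g' b'
  assume inv: "final_root_inv cn d 14 v g b" and match: "(Some m, c) \<in> search Unroot1 g"
    and step: "g' \<in> app Unroot1 g m" and spent: "b \<le> b' + 7"
  have cg: "counter_graph cn d g" using inv by (simp add: final_root_inv_def)
  have rv: "roots g = {v}" using inv roots_eq_singleton by (auto simp: final_root_inv_def)
  from search_Unroot1_SomeD[OF match] rv have m: "m = [v]" by auto
  have g': "g' = g\<lparr>nmk := (nmk g)(v := NGrey), rt := {}\<rparr>"
    using inv step m by (simp add: final_root_inv_def)
  have "counter_graph cn d g'"
    unfolding g' by (rule counter_graph_update[OF cg])
      (use inv cg in \<open>auto simp: final_root_inv_def counter_graph_def\<close>)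
  moreover have "n_blue g' = n_blue g - 1 \<and> n_blue g \<ge> 1"
  proof -
    have "nodes_mk g' NBlue = nodes_mk g NBlue - {v}" "v \<in> nodes_mk g NBlue"
      using inv by (auto simp: g' nodes_mk_def final_root_inv_def)
    then show ?thesis using card_remove finite_nodes_mk counter_graph_finite[OF cg] by metis
  qed
  ultimately show "final_inv cn d g' b'" using inv spent unfolding final_inv_def final_root_inv_def
    by (auto simp: count_defs g')
next
  fix g b c b'
  assume inv: "final_root_inv cn d 14 v g b" and no_match: "(None, c) \<in> search Unroot1 g"
    and "b \<le> b' + 7"
  have rv: "roots g = {v}" using inv roots_eq_singleton by (auto simp: final_root_inv_def)
  show False using search_Unroot1_NoneD[OF no_match] inv rv by (auto simp: final_root_inv_def)
qed

lemma final_relax_loop: "hoare (final_inv cn d) (Loop (Seq (R Root1)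
                  (Seq (Loop (Seq (R UnmarkedEdge)
                                  (Seq (IfC (R Reduce) (R SetFlag) Skip) (R Finish))))
                       (R Unroot1)))) (final_tail_inv cn d 21) (\<lambda>_ _. False)"
proof -
  have inner: "hoare (final_root_inv cn d 7 v)
      (Seq (R UnmarkedEdge) (Seq (IfC (R Reduce) (R SetFlag) Skip) (R Finish)))
     (final_root_inv cn d 7 v) (final_root_inv cn d 14 v)" for v
  proof -
    have "hoare (final_red_inv cn d 21 v e) (Seq (IfC (R Reduce) (R SetFlag) Skip) (R Finish))
        (final_root_inv cn d 7 v) (\<lambda>_ _. False)" for e
      by (rule hoare_seq[OF final_if_Reduce final_Finish]) simp_all
    then show ?thesis by (rule hoare_seq[OF final_UnmarkedEdge hoare_exists]) simp_all
  qed
  have rest: "hoare (final_root_inv cn d 7 v)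
      (Seq (Loop (Seq (R UnmarkedEdge) (Seq (IfC (R Reduce) (R SetFlag) Skip) (R Finish))))
        (R Unroot1))
     (final_inv cn d) (\<lambda>_ _. False)" for v
    by (rule hoare_seq[OF hoare_loop[OF _ inner] final_Unroot1]) simp_all
  have body: "hoare (final_inv cn d) (Seq (R Root1)
                  (Seq (Loop (Seq (R UnmarkedEdge)
                                  (Seq (IfC (R Reduce) (R SetFlag) Skip) (R Finish))))
                       (R Unroot1))) (final_inv cn d) (final_tail_inv cn d 21)"
    by (rule hoare_seq[OF final_Root1 hoare_exists[OF rest]]) simp_all
  show ?thesis by (rule hoare_loop[OF _ body]) simp
qed

lemma final_Flag:
  "hoare (\<lambda>g b. final_tail_inv cn d 21 g b \<and> g = g0) (R Flag)
     (\<lambda>_ b. final_tail_inv cn d 14 g0 b) (final_tail_inv cn d 14)"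
proof (rule hoare_rule)
  fix g b assume inv: "final_tail_inv cn d 21 g b \<and> g = g0"
  then have cg: "counter_graph cn d g" unfolding final_tail_inv_def by blast
  then show "finite (V g) \<and> finite (E g) \<and> cost_le 6 (search Flag g) \<and> 7 \<le> b"
    using inv counter_graph_search_cost[of cn d g Flag] by (auto simp: final_tail_inv_def)
next
  fix g b m c g' b' assume "final_tail_inv cn d 21 g b \<and> g = g0" "b \<le> b' + 7"
  then show "final_tail_inv cn d 14 g0 b'" unfolding final_tail_inv_def by auto
next
  fix g b c b' assume "final_tail_inv cn d 21 g b \<and> g = g0" "b \<le> b' + 7"
  then show "final_tail_inv cn d 14 g b'" unfolding final_tail_inv_def by auto
qed

lemma final_if_Flag:
  "hoare (final_tail_inv cn d 21) (IfC (R Flag) Fail Skip) (final_tail_inv cn d 14) (\<lambda>_ _. True)"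
  by (rule hoare_conseq[OF hoare_if[OF final_Flag hoare_fail hoare_skip]]) auto

lemma final_DeleteCounter:
  "hoare (final_tail_inv cn d 14) (R DeleteCounter) restore_inv (\<lambda>_ _. True)"
proof (rule hoare_rule)
  fix g b assume inv: "final_tail_inv cn d 14 g b"
  then have cg: "counter_graph cn d g" by (simp add: final_tail_inv_def)
  then show "finite (V g) \<and> finite (E g) \<and> cost_le 6 (search DeleteCounter g) \<and> 7 \<le> b"
    using inv counter_graph_search_cost[of cn d g DeleteCounter] by (auto simp: final_tail_inv_def)
next
  fix g b m c g' b'
  assume inv: "final_tail_inv cn d 14 g b" and "(Some m, c) \<in> search DeleteCounter g"
    and step: "g' \<in> app DeleteCounter g m" and spent: "b \<le> b' + 7"
  have cg: "counter_graph cn d g" using inv by (simp add: final_tail_inv_def)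
  have g': "V g' = V g - {m ! 1}" "E g' = E g - {m ! 2}" using step by auto
  have f: "finite (V g')" "finite (E g')" using g' counter_graph_finite[OF cg] by auto
  have "card (nodes_mk g' NUnm) \<le> card (V g')" using card_nodes_mk_le f by blast
  also have "\<dots> \<le> card (V g)" unfolding g' using counter_graph_finite[OF cg] by (simp add: card_mono)
  finally show "restore_inv g' b'"
    using f inv spent unfolding restore_inv_def final_tail_inv_def by auto
qed simp

lemma final_NoDegInv: "hoare restore_inv (R NoDegInv) restore_inv (\<lambda>_ _. True)"
proof (rule hoare_rule)
  fix g b assume inv: "restore_inv g b"
  then show "finite (V g) \<and> finite (E g) \<and> cost_le 6 (search NoDegInv g) \<and> 7 \<le> b"
    using search_NoDegInv_cost_le by (auto simp: restore_inv_def)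
next
  fix g b m c g' b'
  assume inv: "restore_inv g b" and match: "(Some m, c) \<in> search NoDegInv g"
    and step: "g' \<in> app NoDegInv g m" and spent: "b \<le> b' + 7"
  from search_NoDegInv_SomeD[OF match] obtain v where v: "v \<in> nodes_mk g NUnm" "m = [v]" by blast
  have g': "g' = g\<lparr>nmk := (nmk g)(v := NGrey)\<rparr>" using step v by simp
  have "card (nodes_mk g' NUnm) = card (nodes_mk g NUnm) - 1 \<and> card (nodes_mk g NUnm) \<ge> 1"
  proof -
    have "nodes_mk g' NUnm = nodes_mk g NUnm - {v}" using v by (auto simp: g' nodes_mk_def)
    then show ?thesis using v card_remove finite_nodes_mk inv unfolding restore_inv_def by metis
  qed
  then show "restore_inv g' b'" using inv spent unfolding restore_inv_def by (auto simp: g')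
qed simp

lemma Final_terminates: "hoare (final_inv cn d) Final (\<lambda>_ _. True) (\<lambda>_ _. True)"
proof -
  have "hoare (final_tail_inv cn d 14) (Seq (R DeleteCounter) (Loop (R NoDegInv)))
      (\<lambda>_ _. True) (\<lambda>_ _. True)"
    by (rule hoare_seq[OF final_DeleteCounter hoare_loop[OF _ final_NoDegInv]]) simp_all
  then have "hoare (final_tail_inv cn d 21)
      (Seq (IfC (R Flag) Fail Skip) (Seq (R DeleteCounter) (Loop (R NoDegInv))))
      (\<lambda>_ _. True) (\<lambda>_ _. True)"
    by (rule hoare_seq[OF final_if_Flag]) simp_all
  then show ?thesis unfolding Final_def by (rule hoare_seq[OF final_relax_loop]) simp_all
qed

definition budget :: "hgraph \<Rightarrow> nat" where "budget g = 1000 * card (V g) * (card (E g) + 1)"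

lemma count_inv_after_set_counter:
  assumes inp: "bf_input G" and v: "v \<in> rt G" and cV: "c \<notin> V G" and eE: "e \<notin> E G"
    and g': "g' = G\<lparr>V := insert c (V G), E := insert e (E G),
        src := (src G)(e := c), tgt := (tgt G)(e := v),
        nlab := (nlab G)(v := nlab G v @ [AInt 0], c := [AInt 0]), elab := (elab G)(e := []),
        nmk := (nmk G)(v := NBlue, c := NGreen), emk := (emk G)(e := EDashed),
        rt := rt G - {v, c}\<rparr>"
    and bud: "budget G \<le> b' + 7"
  shows "count_inv c e g' b'"
proof -
  have w: "finite (V G)" "finite (E G)" "\<forall>e\<in>E G. src G e \<in> V G \<and> tgt G e \<in> V G" "rt G \<subseteq> V G"
    using inp unfolding bf_input_def wf_graph_def by auto
  have grey: "\<forall>u\<in>V G. nmk G u = NGrey" and card1: "card (rt G) = 1"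
    and edges: "\<forall>e\<in>E G. emk G e = EUnm" using inp unfolding bf_input_def by auto
  have rtv: "rt G = {v}" using card1 v by (metis card_1_singletonE singletonD)
  have vV: "v \<in> V G" using v w(4) by auto
  have vc: "v \<noteq> c" using vV cV by auto
  have counter_graph: "counter_graph c e g'" unfolding counter_graph_def g'
    using w grey edges vV cV eE vc rtv by auto
  have red: "edges_mk g' ERed = {}" unfolding edges_mk_def g' using edges eE by auto
  have rt0: "rt g' = {}" unfolding g' using rtv by auto
  have lab0: "counter_value c 0 g'" unfolding counter_value_def g' by simp
  define n where "n = card (V G)"
  define m where "m = card (E G)"
  have n1: "n \<ge> 1" using vV w(1) card_gt_0_iff[of "V G"] unfolding n_def by auto
  have cv': "card (V g') = n + 1" unfolding g' n_def using w(1) cV by simp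
  have ce': "card (E g') = m + 1" unfolding g' m_def using w(2) eE by simp
  have n_grey: "n_grey g' \<le> n + 1"
    using card_nodes_mk_le[of g'] counter_graph_finite[OF counter_graph] cv' by simp
  have "(0 + n_grey g') * round_cost g' \<le> (n + 1) * round_cost g'"
    using mult_le_mono1[OF n_grey] by simp
  moreover have "(n + 1) * round_cost g' = 168 * n + 147 * (n * m) + 168 + 147 * m"
    unfolding round_cost_def ce' by (simp add: algebra_simps)
  moreover have "final_cost g' = 35 * n + 28 * m + 98" unfolding final_cost_def cv' ce' by simp
  moreover have "budget G = 1000 * (n * m) + 1000 * n"
    unfolding budget_def n_def[symmetric] m_def[symmetric]
    by (simp add: algebra_simps)
  moreover have "m \<le> n * m" using n1 by simp
  ultimately have
    "7 * n_grey g' + 7 + (0 + n_grey g') * round_cost g' + 28 * card (V g') + final_cost g' \<le> b'"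
    using bud n_grey cv' n1 by linarith
  then show ?thesis unfolding count_inv_def using counter_graph red rt0 lab0 by blast
qed

lemma set_counter:
  "hoare (\<lambda>g b. bf_input g \<and> b = budget g) (R SetCounter)
     (\<lambda>g b. \<exists>cn d. count_inv cn d g b) (\<lambda>_ _. True)"
proof (rule hoare_rule)
  fix g b assume inv: "bf_input g \<and> b = budget g"
  have w: "finite (V g)" "finite (E g)" "rt g \<subseteq> V g"
    using inv unfolding bf_input_def wf_graph_def by auto
  have grey: "\<forall>u\<in>V g. nmk g u = NGrey" and card1: "card (rt g) = 1"
    and edges: "\<forall>e\<in>E g. emk g e = EUnm" using inv unfolding bf_input_def by auto
  have "roots g = rt g" unfolding roots_def using w by auto
  moreover have "nodes_mk g NGreen = {}" using grey unfolding nodes_mk_def by auto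
  moreover have "out_mk g u ERed = {}" "out_mk g u EDashed = {}" for u
    using edges unfolding out_mk_def by auto
  ultimately have "few_candidates g" unfolding few_candidates_def using card1 by simp
  then have "cost_le 6 (search SetCounter g)" using search_cost_le by blast
  moreover have "card (V g) \<ge> 1" using card1 w card_mono[OF w(1) w(3)] by simp
  then have "7 \<le> b" using inv unfolding budget_def by (simp add: mult_le_mono)
  ultimately show "finite (V g) \<and> finite (E g) \<and> cost_le 6 (search SetCounter g) \<and> 7 \<le> b"
    using w by blast
next
  fix g b m c g' b'
  assume inv: "bf_input g \<and> b = budget g" and match: "(Some m, c) \<in> search SetCounter g"
    and step: "g' \<in> app SetCounter g m" and spent: "b \<le> b' + 7"
  from search_SetCounter_SomeD[OF match] obtain v where v: "v \<in> roots g" "m = [v]" by blast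
  from step v obtain cc ee where ce: "cc \<notin> V g" "ee \<notin> E g"
    "g' = g\<lparr>V := insert cc (V g), E := insert ee (E g),
        src := (src g)(ee := cc), tgt := (tgt g)(ee := v),
        nlab := (nlab g)(v := nlab g v @ [AInt 0], cc := [AInt 0]), elab := (elab g)(ee := []),
        nmk := (nmk g)(v := NBlue, cc := NGreen), emk := (emk g)(ee := EDashed),
        rt := rt g - {v, cc}\<rparr>" by (auto simp: Let_def)
  have "count_inv cc ee g' b'"
    using count_inv_after_set_counter[of g v cc ee g' b'] inv spent v(1) ce unfolding roots_def by auto
  then show "\<exists>cn d. count_inv cn d g' b'" by blast
qed simp

lemma bellman_ford_terminates:
  "hoare (\<lambda>g b. bf_input g \<and> b = budget g) bellman_ford (\<lambda>_ _. True) (\<lambda>_ _. True)"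
proof -
  have "hoare (\<lambda>g b. \<exists>cn d. count_inv cn d g b)
      (Seq (Loop (R Count)) (Seq (Loop (Seq (R Decrement) (Seq (Loop Relax) (Loop Clean)))) Final))
      (\<lambda>_ _. True) (\<lambda>_ _. True)"
  proof (intro hoare_exists)
    fix cn d
    have "hoare (\<lambda>g b. \<exists>i. round_inv cn d i g b)
        (Seq (Loop (Seq (R Decrement) (Seq (Loop Relax) (Loop Clean)))) Final)
        (\<lambda>_ _. True) (\<lambda>_ _. True)"
      by (rule hoare_seq[OF main_loop Final_terminates]) simp_all
    then show "hoare (count_inv cn d)
        (Seq (Loop (R Count)) (Seq (Loop (Seq (R Decrement) (Seq (Loop Relax) (Loop Clean)))) Final))
        (\<lambda>_ _. True) (\<lambda>_ _. True)"
      by (rule hoare_seq[OF count_loop]) simp_all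
  qed
  then show ?thesis unfolding bellman_ford_def by (rule hoare_seq[OF set_counter]) simp_all
qed

theorem mainTheorem8:
  shows "\<exists>C::nat. \<forall>G. bf_input G \<longrightarrow>
           (let B = C * card (V G) * (card (E G) + 1) in
              (\<exists>r. exec bellman_ford G B r) \<and> \<not> exec bellman_ford G B Out)"
proof (intro exI[of _ 1000] allI impI)
  fix G assume "bf_input G"
  then show "let B = 1000 * card (V G) * (card (E G) + 1) in
      (\<exists>r. exec bellman_ford G B r) \<and> \<not> exec bellman_ford G B Out"
    using bellman_ford_terminates unfolding hoare_def budget_def Let_def by blast
qed

end
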